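(* Let $A$ be a strongly AUF algebra, let $M\in\mathrm{Coh}_{\mathrm L}(A)$ be a projective generator of $\mathrm{Coh}_{\mathrm L}(A)$, and let $B=\mathrm{End}_{A,-}(M)^{\mathrm{op}}$, so that $M$ is an $A$-$B$ bimodule. Then $M$ has a left coordinate system and a right coordinate system. Moreover, the map $$\mathrm{SLF}(A)\to\mathrm{SLF}(B),\qquad \psi\mapsto {}^{\psi}\mathrm{Tr}$$ is a linear isomorphism, whose inverse is $$\mathrm{SLF}(B)\to\mathrm{SLF}(A),\qquad \phi\mapsto \mathrm{Tr}^{\phi},$$ where both pseudotraces are taken with respect to the $A$-$B$ bimodule $M$.
   Context: All algebras are associative $\mathbb C$-algebras, not necessarily unital. An idempotent is an element $e$ with $e^2=e$. An algebra $A$ is AUF if there is a family $(e_i)_{i\in\mathfrak I}$ of mutually orthogonal idempotents ($e_ie_j=0$ for $i\neq j$) with $\dim e_iAe_j<\infty$ for all $i,j$ and $A=\sum_{i,j\in\mathfrak I}e_iAe_j$ (every element is a finite sum of elements of the spaces $e_iAe_j$). A left $A$-module $M$ is quasicoherent if $\xi\in A\xi$ for all $\xi\in M$; it is coherent if it is quasicoherent and finitely generated; $\mathrm{Coh}_{\mathrm L}(A)$ is the category of coherent left $A$-modules. A left module is irreducible if it is nonzero and has no nonzero proper submodules. An idempotent $e\in A$ is generating if every irreducible quasicoherent left $A$-module is a quotient of $Ae$. An AUF algebra is strongly AUF if it has a generating idempotent. A projective generator of $\mathrm{Coh}_{\mathrm L}(A)$ is an $M\in \mathrm{Coh}_{\mathrm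 L}(A)$ that is projective as a left $A$-module and such that every $N\in\mathrm{Coh}_{\mathrm L}(A)$ is a quotient of $M^{\oplus n}$ for some $n\ge1$. $\mathrm{Hom}_{A,-}$ denotes left $A$-module maps, $\mathrm{Hom}_{-,B}$ right $B$-module maps; $B=\mathrm{End}_{A,-}(M)^{\mathrm{op}}$ acts on $M$ on the right by $\xi\cdot T=T(\xi)$; for $y\in B$ write $y^{\mathrm{op}}$ for the corresponding map $\xi\mapsto \xi y$ in $\mathrm{End}_{A,-}(M)$. For an algebra $C$, $\mathrm{SLF}(C)$ is the space of linear maps $\phi:C\to\mathbb C$ with $\phi(xy)=\phi(yx)$ for all $x,y$. Left coordinate system (for algebras $A$, $B$ with $B$ unital, and an $A$-$B$ bimodule $M$): a family $\alpha_i\in\mathrm{Hom}_{-,B}(B,M)$, $\check\alpha^i\in\mathrm{Hom}_{-,B}(M,B)$, $i\in I$, such that (a) for each $\xi\in M$, $\check\alpha^i(\xi)=0$ for all but finitely many $i$ and $\sum_i\alpha_i\check\alpha^i(\xi)=\xi$; (b) for each $x\in A$ (acting on $M$), $x\circ\alpha_i=0$ and $\check\alpha^i\circ x=0$ for all but finitely many $i$. The left pseudotrace of $\phi\in\mathrm{SLF}(B)$ is $\mathrm{Tr}^\phi(x)=\sum_i\phi\big(\check\alpha^i(x\,\alpha_i(1_B))\big)$ for $x\in A$; it is a well-defined element of $\mathrm{SLF}(A)$ independent of the left coordinate system. Right coordinate system (for $A$ AUF, $B$ unital, $M$ an $A$-$B$ bimodule that is coherent as a left $A$-module): an idempotent $e\in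 A$ and a finite family $\beta_j\in\mathrm{Hom}_{A,-}(Ae,M)$, $\check\beta^j\in\mathrm{Hom}_{A,-}(M,Ae)$ with $\sum_j\beta_j\circ\check\beta^j=\mathrm{id}_M$. The right pseudotrace of $\psi\in\mathrm{SLF}(A)$ is ${}^\psi\mathrm{Tr}(y)=\sum_j\psi\big(\check\beta^j(\beta_j(e)\,y)\big)$ for $y\in B$ (note $\check\beta^j(\beta_j(e)y)\in eAe$); it is a well-defined element of $\mathrm{SLF}(B)$ independent of the right coordinate system. *)

theory Defs
  imports Complex_Main "HOL-Library.Function_Algebras"
begin

text \<open>An associative, not necessarily unital complex algebra is a type of class ring
  (a non-unital ring) together with a complex scalar multiplication sA making it a
  complex vector space such that the product is bilinear.\<close>

definition calg :: "(complex \<Rightarrow> 'a::ring \<Rightarrow> 'a) \<Rightarrow> bool" where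
  "calg sA \<longleftrightarrow> vector_space sA \<and>
     (\<forall>c x y. sA c (x * y) = sA c x * y \<and> sA c (x * y) = x * sA c y)"

definition idem :: "'a::ring \<Rightarrow> bool" where
  "idem e \<longleftrightarrow> e * e = e"

text \<open>AUF: a family of mutually orthogonal idempotents (represented as a set E of
  idempotents) with finite-dimensional corners e A f whose sum is all of A.\<close>

definition AUF :: "(complex \<Rightarrow> 'a::ring \<Rightarrow> 'a) \<Rightarrow> bool" where
  "AUF sA \<longleftrightarrow> calg sA \<and>
    (\<exists>E::'a set.
       (\<forall>e\<in>E. idem e) \<and>
       (\<forall>e\<in>E. \<forall>f\<in>E. e \<noteq> f \<longrightarrow> e * f = 0) \<and>
       (\<forall>e\<in>E. \<forall>f\<in>E. \<exists>F. finite F \<and> {e * x * f | x. True} \<subseteq> module.span sA F) \<and>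
       (\<forall>x. \<exists>F y. finite F \<and> F \<subseteq> E \<times> E \<and>
              x = (\<Sum>p\<in>F. fst p * y p * snd p)))"

text \<open>A left A-module is given by a carrier S inside an ambient complex vector space
  (type 'v with scalar multiplication sV) together with an action act.\<close>

definition is_sub :: "(complex \<Rightarrow> 'v::ab_group_add \<Rightarrow> 'v) \<Rightarrow> ('a \<Rightarrow> 'v \<Rightarrow> 'v) \<Rightarrow> 'v set \<Rightarrow> bool" where
  "is_sub sV act T \<longleftrightarrow> 0 \<in> T \<and> (\<forall>x\<in>T. \<forall>y\<in>T. x + y \<in> T) \<and>
     (\<forall>c. \<forall>x\<in>T. sV c x \<in> T) \<and> (\<forall>a. \<forall>x\<in>T. act a x \<in> T)"

definition is_lmod :: "(complex \<Rightarrow> 'a::ring \<Rightarrow> 'a) \<Rightarrow> (complex \<Rightarrow> 'v::ab_group_add \<Rightarrow> 'v)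
    \<Rightarrow> ('a \<Rightarrow> 'v \<Rightarrow> 'v) \<Rightarrow> 'v set \<Rightarrow> bool" where
  "is_lmod sA sV act S \<longleftrightarrow> vector_space sV \<and> is_sub sV act S \<and>
     (\<forall>a b. \<forall>x\<in>S. act (a * b) x = act a (act b x)) \<and>
     (\<forall>a b. \<forall>x\<in>S. act (a + b) x = act a x + act b x) \<and>
     (\<forall>a. \<forall>x\<in>S. \<forall>y\<in>S. act a (x + y) = act a x + act a y) \<and>
     (\<forall>c a. \<forall>x\<in>S. act (sA c a) x = sV c (act a x)) \<and>
     (\<forall>c a. \<forall>x\<in>S. act a (sV c x) = sV c (act a x))"

definition lhom :: "(complex \<Rightarrow> 'v::ab_group_add \<Rightarrow> 'v) \<Rightarrow> (complex \<Rightarrow> 'w::ab_group_add \<Rightarrow> 'w)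
    \<Rightarrow> ('a \<Rightarrow> 'v \<Rightarrow> 'v) \<Rightarrow> ('a \<Rightarrow> 'w \<Rightarrow> 'w) \<Rightarrow> 'v set \<Rightarrow> 'w set \<Rightarrow> ('v \<Rightarrow> 'w) \<Rightarrow> bool" where
  "lhom sV sW actV actW S T f \<longleftrightarrow> (\<forall>x\<in>S. f x \<in> T) \<and>
     (\<forall>x\<in>S. \<forall>y\<in>S. f (x + y) = f x + f y) \<and>
     (\<forall>c. \<forall>x\<in>S. f (sV c x) = sW c (f x)) \<and>
     (\<forall>a. \<forall>x\<in>S. f (actV a x) = actW a (f x))"

definition quasicoherent :: "('a \<Rightarrow> 'v \<Rightarrow> 'v) \<Rightarrow> 'v set \<Rightarrow> bool" where
  "quasicoherent act S \<longleftrightarrow> (\<forall>\<xi>\<in>S. \<exists>x. act x \<xi> = \<xi>)"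

definition gen_sub :: "(complex \<Rightarrow> 'v::ab_group_add \<Rightarrow> 'v) \<Rightarrow> ('a \<Rightarrow> 'v \<Rightarrow> 'v) \<Rightarrow> 'v set \<Rightarrow> 'v set" where
  "gen_sub sV act G = \<Inter>{T. is_sub sV act T \<and> G \<subseteq> T}"

definition fin_gen :: "(complex \<Rightarrow> 'v::ab_group_add \<Rightarrow> 'v) \<Rightarrow> ('a \<Rightarrow> 'v \<Rightarrow> 'v) \<Rightarrow> 'v set \<Rightarrow> bool" where
  "fin_gen sV act S \<longleftrightarrow> (\<exists>G. finite G \<and> G \<subseteq> S \<and> S = gen_sub sV act G)"

definition coherent :: "(complex \<Rightarrow> 'a::ring \<Rightarrow> 'a) \<Rightarrow> (complex \<Rightarrow> 'v::ab_group_add \<Rightarrow> 'v)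
    \<Rightarrow> ('a \<Rightarrow> 'v \<Rightarrow> 'v) \<Rightarrow> 'v set \<Rightarrow> bool" where
  "coherent sA sV act S \<longleftrightarrow> is_lmod sA sV act S \<and> quasicoherent act S \<and> fin_gen sV act S"

definition irreducible_mod :: "(complex \<Rightarrow> 'a::ring \<Rightarrow> 'a) \<Rightarrow> (complex \<Rightarrow> 'v::ab_group_add \<Rightarrow> 'v)
    \<Rightarrow> ('a \<Rightarrow> 'v \<Rightarrow> 'v) \<Rightarrow> 'v set \<Rightarrow> bool" where
  "irreducible_mod sA sV act S \<longleftrightarrow> is_lmod sA sV act S \<and> S \<noteq> {0} \<and>
     (\<forall>T. T \<subseteq> S \<and> is_sub sV act T \<longrightarrow> T = {0} \<or> T = S)"

text \<open>The left ideal A e, as a left module (carrier inside A, action by left multiplication).\<close>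

definition Ae :: "'a::ring \<Rightarrow> 'a set" where
  "Ae e = {x * e | x. True}"

text \<open>Statements quantifying over all left A-modules are rendered by quantifying over
  all modules whose carrier lies in the ambient complex vector space of all functions
  ('a \<times> nat) \<Rightarrow> complex.  Every module occurring in these quantifications (irreducible
  quasicoherent modules, coherent modules, and the modules relevant to the lifting
  property of a finitely generated module) has complex dimension at most the
  cardinality of 'a \<times> nat, hence has an isomorphic copy in this universe.\<close>

type_synonym 'a univ = "'a \<times> nat \<Rightarrow> complex"

definition uscale :: "complex \<Rightarrow> 'a univ \<Rightarrow> 'a univ" where
  "uscale c f = (\<lambda>k. c * f k)"

definition generating_idem :: "(complex \<Rightarrow> 'a::ring \<Rightarrow> 'a) \<Rightarrow> 'a \<Rightarrow> bool" where
  "generating_idem sA e \<longleftrightarrow> idem e \<and>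
     (\<forall>(act :: 'a \<Rightarrow> 'a univ \<Rightarrow> 'a univ) S.
        irreducible_mod sA uscale act S \<and> quasicoherent act S \<longrightarrow>
        (\<exists>q. lhom sA uscale (*) act (Ae e) S q \<and> q ` Ae e = S))"

definition strongly_AUF :: "(complex \<Rightarrow> 'a::ring \<Rightarrow> 'a) \<Rightarrow> bool" where
  "strongly_AUF sA \<longleftrightarrow> AUF sA \<and> (\<exists>e. generating_idem sA e)"

definition lprojective :: "(complex \<Rightarrow> 'a::ring \<Rightarrow> 'a) \<Rightarrow> (complex \<Rightarrow> 'm::ab_group_add \<Rightarrow> 'm)
    \<Rightarrow> ('a \<Rightarrow> 'm \<Rightarrow> 'm) \<Rightarrow> 'm set \<Rightarrow> bool" where
  "lprojective sA sM actM SM \<longleftrightarrow>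
     (\<forall>(act1 :: 'a \<Rightarrow> 'a univ \<Rightarrow> 'a univ) S1 (act2 :: 'a \<Rightarrow> 'a univ \<Rightarrow> 'a univ) S2 f g.
        is_lmod sA uscale act1 S1 \<and> is_lmod sA uscale act2 S2 \<and>
        lhom uscale uscale act1 act2 S1 S2 f \<and> f ` S1 = S2 \<and>
        lhom sM uscale actM act2 SM S2 g \<longrightarrow>
        (\<exists>h. lhom sM uscale actM act1 SM S1 h \<and> (\<forall>\<xi>\<in>SM. f (h \<xi>) = g \<xi>)))"

text \<open>N is a quotient of M^{\<oplus> n}: there are module maps h_0..h_{n-1} : M \<rightarrow> N
  whose sum M^{\<oplus> n} \<rightarrow> N is surjective.\<close>

definition quotient_of_power :: "(complex \<Rightarrow> 'm::ab_group_add \<Rightarrow> 'm) \<Rightarrow> ('a \<Rightarrow> 'm \<Rightarrow> 'm) \<Rightarrow> 'm set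
    \<Rightarrow> (complex \<Rightarrow> 'v::ab_group_add \<Rightarrow> 'v) \<Rightarrow> ('a \<Rightarrow> 'v \<Rightarrow> 'v) \<Rightarrow> 'v set \<Rightarrow> nat \<Rightarrow> bool" where
  "quotient_of_power sM actM SM sV act S n \<longleftrightarrow>
     (\<exists>h. (\<forall>i<n. lhom sM sV actM act SM S (h i)) \<and>
          (\<forall>y\<in>S. \<exists>\<xi>. (\<forall>i<n. \<xi> i \<in> SM) \<and> y = (\<Sum>i<n. h i (\<xi> i))))"

definition proj_generator :: "(complex \<Rightarrow> 'a::ring \<Rightarrow> 'a) \<Rightarrow> (complex \<Rightarrow> 'm::ab_group_add \<Rightarrow> 'm)
    \<Rightarrow> ('a \<Rightarrow> 'm \<Rightarrow> 'm) \<Rightarrow> bool" where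
  "proj_generator sA sM actM \<longleftrightarrow> coherent sA sM actM UNIV \<and> lprojective sA sM actM UNIV \<and>
     (\<forall>(act :: 'a \<Rightarrow> 'a univ \<Rightarrow> 'a univ) S. coherent sA uscale act S \<longrightarrow>
        (\<exists>n\<ge>1. quotient_of_power sM actM UNIV uscale act S n))"

text \<open>B consists of all A-module
  endomorphisms of M; the product in B is y1 \<cdot> y2 = y2 \<circ> y1, the unit is id, and
  M is a right B-module via \<xi> \<cdot> T = T \<xi>.\<close>

definition Bset :: "(complex \<Rightarrow> 'm::ab_group_add \<Rightarrow> 'm) \<Rightarrow> ('a \<Rightarrow> 'm \<Rightarrow> 'm) \<Rightarrow> ('m \<Rightarrow> 'm) set" where
  "Bset sM actM = {T. lhom sM sM actM actM UNIV UNIV T}"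

definition bmult :: "('m \<Rightarrow> 'm) \<Rightarrow> ('m \<Rightarrow> 'm) \<Rightarrow> ('m \<Rightarrow> 'm)" where
  "bmult y1 y2 = y2 \<circ> y1"

definition badd :: "('m \<Rightarrow> 'm) \<Rightarrow> ('m \<Rightarrow> 'm) \<Rightarrow> ('m::ab_group_add \<Rightarrow> 'm)" where
  "badd y1 y2 = (\<lambda>\<xi>. y1 \<xi> + y2 \<xi>)"

definition bscale :: "(complex \<Rightarrow> 'm \<Rightarrow> 'm) \<Rightarrow> complex \<Rightarrow> ('m \<Rightarrow> 'm) \<Rightarrow> ('m \<Rightarrow> 'm)" where
  "bscale sM c y = (\<lambda>\<xi>. sM c (y \<xi>))"

definition bzero :: "'m \<Rightarrow> 'm::zero" where
  "bzero = (\<lambda>\<xi>. 0)"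

definition SLF_A :: "(complex \<Rightarrow> 'a::ring \<Rightarrow> 'a) \<Rightarrow> ('a \<Rightarrow> complex) set" where
  "SLF_A sA = {\<phi>. (\<forall>x y. \<phi> (x + y) = \<phi> x + \<phi> y) \<and> (\<forall>c x. \<phi> (sA c x) = c * \<phi> x) \<and>
                   (\<forall>x y. \<phi> (x * y) = \<phi> (y * x))}"

text \<open>Functionals on B are functions on the type 'm \<Rightarrow> 'm; we normalise them to be 0
  outside the carrier of B, so that SLF(B) is a genuine set of functionals on B.\<close>

definition SLF_B :: "(complex \<Rightarrow> 'm::ab_group_add \<Rightarrow> 'm) \<Rightarrow> ('a \<Rightarrow> 'm \<Rightarrow> 'm) \<Rightarrow> (('m \<Rightarrow> 'm) \<Rightarrow> complex) set" where
  "SLF_B sM actM = {\<phi>. (\<forall>y. y \<notin> Bset sM actM \<longrightarrow> \<phi> y = 0) \<and>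
     (\<forall>y1\<in>Bset sM actM. \<forall>y2\<in>Bset sM actM. \<phi> (badd y1 y2) = \<phi> y1 + \<phi> y2) \<and>
     (\<forall>c. \<forall>y\<in>Bset sM actM. \<phi> (bscale sM c y) = c * \<phi> y) \<and>
     (\<forall>y1\<in>Bset sM actM. \<forall>y2\<in>Bset sM actM. \<phi> (bmult y1 y2) = \<phi> (bmult y2 y1))}"

text \<open>Right B-module maps B \<rightarrow> M (B acting on itself by right multiplication).\<close>

definition hom_BM :: "(complex \<Rightarrow> 'm::ab_group_add \<Rightarrow> 'm) \<Rightarrow> ('a \<Rightarrow> 'm \<Rightarrow> 'm) \<Rightarrow> (('m \<Rightarrow> 'm) \<Rightarrow> 'm) \<Rightarrow> bool" where
  "hom_BM sM actM \<alpha> \<longleftrightarrow>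
     (\<forall>y1\<in>Bset sM actM. \<forall>y2\<in>Bset sM actM. \<alpha> (badd y1 y2) = \<alpha> y1 + \<alpha> y2) \<and>
     (\<forall>c. \<forall>y\<in>Bset sM actM. \<alpha> (bscale sM c y) = sM c (\<alpha> y)) \<and>
     (\<forall>y1\<in>Bset sM actM. \<forall>y2\<in>Bset sM actM. \<alpha> (bmult y1 y2) = y2 (\<alpha> y1))"

definition hom_MB :: "(complex \<Rightarrow> 'm::ab_group_add \<Rightarrow> 'm) \<Rightarrow> ('a \<Rightarrow> 'm \<Rightarrow> 'm) \<Rightarrow> ('m \<Rightarrow> ('m \<Rightarrow> 'm)) \<Rightarrow> bool" where
  "hom_MB sM actM \<beta> \<longleftrightarrow> (\<forall>\<xi>. \<beta> \<xi> \<in> Bset sM actM) \<and>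
     (\<forall>\<xi> \<eta>. \<beta> (\<xi> + \<eta>) = badd (\<beta> \<xi>) (\<beta> \<eta>)) \<and>
     (\<forall>c \<xi>. \<beta> (sM c \<xi>) = bscale sM c (\<beta> \<xi>)) \<and>
     (\<forall>\<xi>. \<forall>y\<in>Bset sM actM. \<beta> (y \<xi>) = bmult (\<beta> \<xi>) y)"

text \<open>A left coordinate system, given as a set L of pairs (\<alpha>_i, \<alpha>-check^i).\<close>

definition left_coord :: "(complex \<Rightarrow> 'm::ab_group_add \<Rightarrow> 'm) \<Rightarrow> ('a \<Rightarrow> 'm \<Rightarrow> 'm)
    \<Rightarrow> ((('m \<Rightarrow> 'm) \<Rightarrow> 'm) \<times> ('m \<Rightarrow> ('m \<Rightarrow> 'm))) set \<Rightarrow> bool" where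
  "left_coord sM actM L \<longleftrightarrow>
     (\<forall>p\<in>L. hom_BM sM actM (fst p) \<and> hom_MB sM actM (snd p)) \<and>
     (\<forall>\<xi>. finite {p\<in>L. snd p \<xi> \<noteq> bzero} \<and>
          (\<Sum>p\<in>{p\<in>L. snd p \<xi> \<noteq> bzero}. fst p (snd p \<xi>)) = \<xi>) \<and>
     (\<forall>x. finite {p\<in>L. (\<exists>y\<in>Bset sM actM. actM x (fst p y) \<noteq> 0) \<or>
                        (\<exists>\<xi>. snd p (actM x \<xi>) \<noteq> bzero)})"

text \<open>Left pseudotrace Tr^\<phi>(x) = \<Sum>_i \<phi>(\<alpha>-check^i(x \<alpha>_i(1_B))); all but finitely many
  summands vanish, and we sum over the indices with nonzero argument.\<close>

definition left_ptr :: "('a \<Rightarrow> 'm::zero \<Rightarrow> 'm) \<Rightarrow> ((('m \<Rightarrow> 'm) \<Rightarrow> 'm) \<times> ('m \<Rightarrow> ('m \<Rightarrow> 'm))) set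
    \<Rightarrow> (('m \<Rightarrow> 'm) \<Rightarrow> complex) \<Rightarrow> 'a \<Rightarrow> complex" where
  "left_ptr actM L \<phi> x =
     (\<Sum>p\<in>{p\<in>L. snd p (actM x (fst p id)) \<noteq> (\<lambda>\<xi>. 0)}. \<phi> (snd p (actM x (fst p id))))"

text \<open>A right coordinate system: idempotent e, and a finite family (indexed by j < n)
  of module maps \<beta>_j : A e \<rightarrow> M and \<beta>-check^j : M \<rightarrow> A e with \<Sum> \<beta>_j \<circ> \<beta>-check^j = id.\<close>

definition right_coord :: "(complex \<Rightarrow> 'a::ring \<Rightarrow> 'a) \<Rightarrow> (complex \<Rightarrow> 'm::ab_group_add \<Rightarrow> 'm)
    \<Rightarrow> ('a \<Rightarrow> 'm \<Rightarrow> 'm) \<Rightarrow> 'a \<Rightarrow> nat \<Rightarrow> (nat \<Rightarrow> 'a \<Rightarrow> 'm) \<Rightarrow> (nat \<Rightarrow> 'm \<Rightarrow> 'a) \<Rightarrow> bool" where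
  "right_coord sA sM actM e n \<beta> \<beta>c \<longleftrightarrow> idem e \<and>
     (\<forall>j<n. lhom sA sM (*) actM (Ae e) UNIV (\<beta> j) \<and> lhom sM sA actM (*) UNIV (Ae e) (\<beta>c j)) \<and>
     (\<forall>\<xi>. (\<Sum>j<n. \<beta> j (\<beta>c j \<xi>)) = \<xi>)"

text \<open>Right pseudotrace {}^\<psi>Tr(y) = \<Sum>_j \<psi>(\<beta>-check^j(\<beta>_j(e) \<cdot> y)), with \<xi> \<cdot> y = y \<xi>;
  set to 0 outside B.\<close>

definition right_ptr :: "(complex \<Rightarrow> 'm::ab_group_add \<Rightarrow> 'm) \<Rightarrow> ('a \<Rightarrow> 'm \<Rightarrow> 'm) \<Rightarrow> 'a \<Rightarrow> nat
    \<Rightarrow> (nat \<Rightarrow> 'a \<Rightarrow> 'm) \<Rightarrow> (nat \<Rightarrow> 'm \<Rightarrow> 'a) \<Rightarrow> ('a \<Rightarrow> complex) \<Rightarrow> ('m \<Rightarrow> 'm) \<Rightarrow> complex" where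
  "right_ptr sM actM e n \<beta> \<beta>c \<psi> y =
     (if y \<in> Bset sM actM then (\<Sum>j<n. \<psi> (\<beta>c j (y (\<beta> j e)))) else 0)"

end

theory Submission
  imports Defs
begin

text \<open>In a left coordinate system the matrix coefficients of \<open>x \<in> A\<close> lie in \<open>B\<close> and products in
  \<open>A\<close> become matrix products, so the left pseudotrace of a symmetric functional on \<open>B\<close> is
  symmetric on \<open>A\<close>; dually, in a right coordinate system elements of \<open>B\<close> have matrices over
  \<open>e A e\<close>. The right pseudotrace of \<open>Tr\<^sup>\<phi>\<close> is \<open>\<phi>\<close> by the resolution of the identity
  \<open>\<Sum>\<^sub>j\<^sub>,\<^sub>p \<alpha>-check\<^sup>p(\<beta>\<^sub>j(e)) \<circ> (\<zeta> \<mapsto> \<beta>-check\<^sup>j(\<zeta>) e \<alpha>\<^sub>p(1)) = id\<close> of \<open>M\<close>.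
  Conversely, each idempotent \<open>k\<close> of the AUF family generates a coherent module \<open>A k\<close>, a
  quotient of some \<open>M\<^sup>N\<close>: \<open>k = \<Sum>\<^sub>l H\<^sub>l(X\<^sub>l)\<close> with \<open>A\<close>-linear \<open>H\<^sub>l : M \<rightarrow> A k\<close>. The pairs
  \<open>\<alpha>(y) = y(k X\<^sub>l)\<close>, \<open>\<alpha>-check(\<xi>) = (\<zeta> \<mapsto> H\<^sub>l(\<zeta>) k \<xi>)\<close> form a left coordinate system in which
  the left pseudotrace of \<open>\<^sup>\<psi>Tr\<close> is \<open>x \<mapsto> \<Sum>\<^sub>k \<psi>(x k) = \<psi>(x)\<close>. Hence \<open>\<psi> \<mapsto> \<^sup>\<psi>Tr\<close> is injective,
  and thus bijective with inverse \<open>\<phi> \<mapsto> Tr\<^sup>\<phi>\<close> for every left coordinate system. Right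
  coordinate systems exist because the surjection from \<open>(A f)\<^sup>m\<close> onto finitely many generators of
  the projective module \<open>M\<close> splits. Modules are compared with the universe \<open>'a univ\<close> of the definitions through injective
  linear maps into coefficient functions.\<close>

text \<open>With this rule the simplifier eta-expands sums in \<open>B\<close> produced by rewriting (for instance
  by \<open>hom_MB_add\<close>), after which they no longer match; it is used explicitly where needed.\<close>
declare plus_fun_apply [simp del]

lemma vector_space_uscale: "vector_space (uscale :: complex \<Rightarrow> 'b univ \<Rightarrow> 'b univ)"
  unfolding vector_space_def uscale_def by (auto simp: fun_eq_iff algebra_simps plus_fun_apply)

lemma vector_space_pointwise:
  assumes "vector_space s"
  shows "vector_space (\<lambda>c (y :: 'i \<Rightarrow> 'v::ab_group_add) i. s c (y i))"
  using assms unfolding vector_space_def by (auto simp: fun_eq_iff plus_fun_apply)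

lemma additive_sum:
  fixes f :: "'x::comm_monoid_add \<Rightarrow> 'y::ab_group_add"
  assumes "\<And>x y. f (x + y) = f x + f y"
  shows "f (sum g I) = (\<Sum>i\<in>I. f (g i))"
proof -
  have "f 0 = 0" using assms[of 0 0] by simp
  then show ?thesis using sum_comp_morphism[of f g I] assms by (simp add: comp_def)
qed

lemma sum_fun_apply: "(sum f A) x = (\<Sum>a\<in>A. f a x)"
  by (induction A rule: infinite_finite_induct) (auto simp: plus_fun_apply)

lemma exists_linear_coordinates:
  fixes s :: "complex \<Rightarrow> 'v::ab_group_add \<Rightarrow> 'v" and \<phi> :: "'i \<Rightarrow> 'v"
  assumes "vector_space s" and "UNIV \<subseteq> module.span s (range \<phi>)"
  shows "\<exists>\<iota> :: 'v \<Rightarrow> 'i \<Rightarrow> complex. inj \<iota> \<and> (\<forall>x y. \<iota> (x + y) = \<iota> x + \<iota> y) \<and>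
           (\<forall>c x. \<iota> (s c x) = (\<lambda>i. c * \<iota> x i))"
proof -
  interpret vector_space s by fact
  obtain Bs where Bs: "Bs \<subseteq> range \<phi>" "independent Bs" "range \<phi> \<subseteq> span Bs"
    using maximal_independent_subset by blast
  have in_span: "x \<in> span Bs" for x
    using assms(2) span_minimal[OF Bs(3) subspace_span] by blast
  define idx where "idx b = (SOME i. \<phi> i = b)" for b
  have idx: "\<phi> (idx b) = b" if "b \<in> Bs" for b
    using that Bs(1) unfolding idx_def by (metis (mono_tags, lifting) imageE someI subsetD)
  \<comment> \<open>coordinates in a basis extracted from the family, stored at one index per basis vector\<close>
  define \<iota> where "\<iota> x = (\<lambda>i. if \<phi> i \<in> Bs \<and> i = idx (\<phi> i) then representation Bs x (\<phi> i) else 0)" for x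
  have "x = y" if "\<iota> x = \<iota> y" for x y
  proof -
    have "representation Bs x b = representation Bs y b" for b
    proof (cases "b \<in> Bs")
      case True
      then show ?thesis using fun_cong[OF that, of "idx b"] idx[OF True] by (simp add: \<iota>_def)
    qed (metis representation_ne_zero)
    then have "representation Bs x = representation Bs y" by blast
    then show "x = y"
      by (metis sum_nonzero_representation_eq[OF Bs(2) in_span])
  qed
  then have "inj \<iota>" by (rule injI)
  moreover have "\<iota> (x + y) = \<iota> x + \<iota> y" for x y
    using representation_add[OF Bs(2) in_span in_span] by (auto simp: \<iota>_def fun_eq_iff plus_fun_apply)
  moreover have "\<iota> (s c x) = (\<lambda>i. c * \<iota> x i)" for c x
    using representation_scale[OF Bs(2) in_span] by (auto simp: \<iota>_def fun_eq_iff)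
  ultimately show ?thesis by blast
qed

definition univ_embedding :: "(complex \<Rightarrow> 'w::ab_group_add \<Rightarrow> 'w) \<Rightarrow> 'w set \<Rightarrow> ('w \<Rightarrow> 'b univ) \<Rightarrow> bool"
  where "univ_embedding sW D \<Phi> \<longleftrightarrow> inj_on \<Phi> D \<and> (\<forall>x\<in>D. \<forall>y\<in>D. \<Phi> (x + y) = \<Phi> x + \<Phi> y) \<and>
           (\<forall>c. \<forall>x\<in>D. \<Phi> (sW c x) = uscale c (\<Phi> x))"

lemma univ_embedding_subset: "univ_embedding sW D \<Phi> \<Longrightarrow> D' \<subseteq> D \<Longrightarrow> univ_embedding sW D' \<Phi>"
  unfolding univ_embedding_def by (meson inj_on_subset subsetD)

lemma univ_embedding_families:
  assumes "vector_space sA"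
  shows "\<exists>\<Phi> :: (nat \<Rightarrow> 'a::ab_group_add) \<Rightarrow> 'a univ. univ_embedding (\<lambda>c y i. sA c (y i)) UNIV \<Phi>"
proof -
  interpret vector_space sA by fact
  obtain \<iota> :: "'a \<Rightarrow> 'a \<Rightarrow> complex" where \<iota>: "inj \<iota>" "\<And>x y. \<iota> (x + y) = \<iota> x + \<iota> y"
      "\<And>c x. \<iota> (sA c x) = (\<lambda>i. c * \<iota> x i)"
    using exists_linear_coordinates[OF assms, of id] span_superset by auto
  define \<Phi> where "\<Phi> y = (\<lambda>(a, i). \<iota> (y i) a)" for y :: "nat \<Rightarrow> 'a"
  have "y = z" if "\<Phi> y = \<Phi> z" for y z
  proof
    fix i
    have "\<iota> (y i) a = \<iota> (z i) a" for a using fun_cong[OF that, of "(a, i)"] by (simp add: \<Phi>_def)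
    then have "\<iota> (y i) = \<iota> (z i)" by blast
    then show "y i = z i" using \<iota>(1) by (simp add: inj_eq)
  qed
  then have "inj \<Phi>" by (rule injI)
  then show ?thesis unfolding univ_embedding_def by (auto simp: \<Phi>_def \<iota> uscale_def fun_eq_iff plus_fun_apply)
qed

lemma univ_embedding_elements:
  assumes "vector_space sA"
  shows "\<exists>\<Phi> :: 'a::ab_group_add \<Rightarrow> 'a univ. univ_embedding sA UNIV \<Phi>"
proof -
  obtain \<Phi> :: "(nat \<Rightarrow> 'a) \<Rightarrow> 'a univ" where \<Phi>: "univ_embedding (\<lambda>c y i. sA c (y i)) UNIV \<Phi>"
    using univ_embedding_families[OF assms] by blast
  have "inj (\<lambda>x. \<Phi> (\<lambda>_. x))"
  proof (rule injI)
    fix x y assume "\<Phi> (\<lambda>_. x) = \<Phi> (\<lambda>_. y)"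
    then have "(\<lambda>_::nat. x) = (\<lambda>_. y)" using \<Phi> by (simp add: univ_embedding_def inj_eq)
    then show "x = y" by (simp add: fun_eq_iff)
  qed
  moreover have "\<Phi> (\<lambda>_. x + y) = \<Phi> (\<lambda>_. x) + \<Phi> (\<lambda>_. y)" for x y
  proof -
    have "(\<lambda>_::nat. x + y) = (\<lambda>_. x) + (\<lambda>_. y)" by (simp add: fun_eq_iff plus_fun_apply)
    then show ?thesis using \<Phi> by (simp add: univ_embedding_def)
  qed
  ultimately show ?thesis
    using \<Phi> unfolding univ_embedding_def by (intro exI[of _ "\<lambda>x. \<Phi> (\<lambda>_. x)"]) simp
qed

definition transport_act :: "('w \<Rightarrow> 'b univ) \<Rightarrow> 'w set \<Rightarrow> ('a \<Rightarrow> 'w \<Rightarrow> 'w) \<Rightarrow> 'a \<Rightarrow> 'b univ \<Rightarrow> 'b univ"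
  where "transport_act \<Phi> D act a v = \<Phi> (act a (inv_into D \<Phi> v))"

lemma transport_act_image: "inj_on \<Phi> D \<Longrightarrow> x \<in> D \<Longrightarrow> transport_act \<Phi> D act a (\<Phi> x) = \<Phi> (act a x)"
  by (simp add: transport_act_def)

lemma is_lmod_transport:
  assumes lmod: "is_lmod sA sW act D" and \<Phi>: "univ_embedding sW D \<Phi>"
  shows "is_lmod sA uscale (transport_act \<Phi> D act) (\<Phi> ` D)"
proof -
  have inj: "inj_on \<Phi> D" and add: "\<And>x y. x \<in> D \<Longrightarrow> y \<in> D \<Longrightarrow> \<Phi> x + \<Phi> y = \<Phi> (x + y)"
    and scale: "\<And>c x. x \<in> D \<Longrightarrow> uscale c (\<Phi> x) = \<Phi> (sW c x)"
    using \<Phi> by (auto simp: univ_embedding_def)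
  have closed: "0 \<in> D" "\<And>x y. x \<in> D \<Longrightarrow> y \<in> D \<Longrightarrow> x + y \<in> D" "\<And>c x. x \<in> D \<Longrightarrow> sW c x \<in> D"
      "\<And>a x. x \<in> D \<Longrightarrow> act a x \<in> D"
    using lmod by (auto simp: is_lmod_def is_sub_def)
  have laws: "act (a * b) x = act a (act b x)" "act (a + b) x = act a x + act b x"
      "act (sA c a) x = sW c (act a x)" "act a (sW c x) = sW c (act a x)"
      "y \<in> D \<Longrightarrow> act a (x + y) = act a x + act a y"
    if "x \<in> D" for a b c x y
    using lmod that by (auto simp: is_lmod_def)
  note act = transport_act_image[OF inj]
  have "\<Phi> 0 = 0" using add[OF closed(1) closed(1)] by simp
  then have "0 \<in> \<Phi> ` D" using closed(1) by force
  moreover have "(\<forall>v\<in>\<Phi> ` D. P v) \<longleftrightarrow> (\<forall>x\<in>D. P (\<Phi> x))" for P by blast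
  ultimately show ?thesis
    unfolding is_lmod_def is_sub_def
    by (simp only: vector_space_uscale) (auto simp: add scale act closed laws)
qed

lemma lhom_transport_codomain:
  assumes f: "lhom sV sW actV actW S D f" and \<Phi>: "univ_embedding sW D \<Phi>"
  shows "lhom sV uscale actV (transport_act \<Phi> D actW) S (\<Phi> ` D) (\<Phi> \<circ> f)"
  using assms by (auto simp: lhom_def univ_embedding_def transport_act_image)

lemma lhom_transport_domain:
  assumes f: "lhom sV sW actV actW D T f" and D: "is_sub sV actV D" and \<Phi>: "univ_embedding sV D \<Phi>"
  shows "lhom uscale sW (transport_act \<Phi> D actV) actW (\<Phi> ` D) T (f \<circ> inv_into D \<Phi>)"
proof -
  have inv: "inv_into D \<Phi> (\<Phi> x) = x" if "x \<in> D" for x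
    using \<Phi> that by (simp add: univ_embedding_def)
  have "\<Phi> x + \<Phi> y = \<Phi> (x + y)" "uscale c (\<Phi> x) = \<Phi> (sV c x)" if "x \<in> D" "y \<in> D" for c x y
    using \<Phi> that by (auto simp: univ_embedding_def)
  then show ?thesis
    using f D by (auto simp: lhom_def is_sub_def inv transport_act_def)
qed

lemma lhom_transport_back:
  assumes h: "lhom sV uscale actV (transport_act \<Phi> D actW) S (\<Phi> ` D) h"
    and S: "is_sub sV actV S" and D: "is_sub sW actW D" and \<Phi>: "univ_embedding sW D \<Phi>"
  shows "lhom sV sW actV actW S D (inv_into D \<Phi> \<circ> h)"
proof -
  have inj: "inj_on \<Phi> D" using \<Phi> by (simp add: univ_embedding_def)
  define z where "z = inv_into D \<Phi> \<circ> h"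
  have zD: "z \<xi> \<in> D" and \<Phi>z: "\<Phi> (z \<xi>) = h \<xi>" if "\<xi> \<in> S" for \<xi>
    using h that by (auto simp: z_def lhom_def inv_into_into f_inv_into_f)
  have z_eq: "z \<xi> = x" if "\<xi> \<in> S" "x \<in> D" "\<Phi> x = h \<xi>" for \<xi> x
    using inj that zD \<Phi>z by (metis inj_on_eq_iff)
  show ?thesis
    unfolding z_def[symmetric] lhom_def
  proof (intro conjI ballI allI)
    fix \<xi> \<eta> assume "\<xi> \<in> S" "\<eta> \<in> S"
    then show "z (\<xi> + \<eta>) = z \<xi> + z \<eta>"
      using h S D \<Phi> zD \<Phi>z by (intro z_eq) (auto simp: lhom_def is_sub_def univ_embedding_def)
  next
    fix c \<xi> assume "\<xi> \<in> S"
    then show "z (sV c \<xi>) = sW c (z \<xi>)"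
      using h S D \<Phi> zD \<Phi>z by (intro z_eq) (auto simp: lhom_def is_sub_def univ_embedding_def)
  next
    fix a \<xi> assume "\<xi> \<in> S"
    show "z (actV a \<xi>) = actW a (z \<xi>)"
    proof (rule z_eq)
      show "\<Phi> (actW a (z \<xi>)) = h (actV a \<xi>)"
        using h \<open>\<xi> \<in> S\<close> zD \<Phi>z by (simp add: lhom_def transport_act_image[OF inj, symmetric])
    qed (use \<open>\<xi> \<in> S\<close> S D zD in \<open>auto simp: is_sub_def\<close>)
  qed (rule zD)
qed

lemma lprojective_section:
  fixes sA :: "complex \<Rightarrow> 'a::ring \<Rightarrow> 'a" and \<pi> :: "'w::ab_group_add \<Rightarrow> 'm::ab_group_add"
    and \<Phi> :: "'w \<Rightarrow> 'a univ" and \<iota> :: "'m \<Rightarrow> 'a univ"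
  assumes proj: "lprojective sA sM actM UNIV" and M: "is_lmod sA sM actM UNIV"
    and \<iota>: "univ_embedding sM UNIV \<iota>"
    and D: "is_lmod sA sW actW D" and \<Phi>: "univ_embedding sW D \<Phi>"
    and \<pi>: "lhom sW sM actW actM D UNIV \<pi>" "\<pi> ` D = UNIV"
  shows "\<exists>z. lhom sM sW actM actW UNIV D z \<and> (\<forall>\<xi>. \<pi> (z \<xi>) = \<xi>)"
proof -
  have subD: "is_sub sW actW D" and subM: "is_sub sM actM UNIV"
    using D M by (simp_all add: is_lmod_def)
  let ?\<pi>' = "\<iota> \<circ> (\<pi> \<circ> inv_into D \<Phi>)"
  have "lhom uscale uscale (transport_act \<Phi> D actW) (transport_act \<iota> UNIV actM) (\<Phi> ` D) (\<iota> ` UNIV) ?\<pi>'"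
    using lhom_transport_codomain[OF lhom_transport_domain[OF \<pi>(1) subD \<Phi>] \<iota>] .
  moreover have "?\<pi>' ` \<Phi> ` D = \<iota> ` UNIV"
    using \<Phi> \<pi>(2) by (simp add: image_comp univ_embedding_def) (metis image_image)
  moreover have "lhom sM uscale actM (transport_act \<iota> UNIV actM) UNIV (\<iota> ` UNIV) \<iota>"
    using lhom_transport_codomain[of sM sM actM actM UNIV UNIV id, OF _ \<iota>] subM
    by (simp add: lhom_def is_sub_def)
  ultimately obtain h where h: "lhom sM uscale actM (transport_act \<Phi> D actW) UNIV (\<Phi> ` D) h"
      and lift: "\<forall>\<xi>\<in>UNIV. ?\<pi>' (h \<xi>) = \<iota> \<xi>"
    using proj[unfolded lprojective_def, rule_format, of "transport_act \<Phi> D actW" "\<Phi> ` D"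
        "transport_act \<iota> UNIV actM" "\<iota> ` UNIV" ?\<pi>' \<iota>]
      is_lmod_transport[OF D \<Phi>] is_lmod_transport[OF M \<iota>]
    by blast
  have "\<pi> ((inv_into D \<Phi> \<circ> h) \<xi>) = \<xi>" for \<xi>
    using lift \<iota> by (simp add: univ_embedding_def inj_eq)
  then show ?thesis using lhom_transport_back[OF h subM subD \<Phi>] by blast
qed

section \<open>Orthogonal idempotent decompositions\<close>

locale idempotent_decomposition =
  fixes E :: "'a::ring set"
  assumes idempotent: "e \<in> E \<Longrightarrow> e * e = e"
    and orthogonal: "e \<in> E \<Longrightarrow> f \<in> E \<Longrightarrow> e \<noteq> f \<Longrightarrow> e * f = 0"
    and decomposition: "\<exists>F y. finite F \<and> F \<subseteq> E \<times> E \<and> x = (\<Sum>p\<in>F. fst p * y p * snd p)"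
begin

lemma sum_idempotents_mult:
  assumes "finite K" "K \<subseteq> E" "e \<in> K"
  shows "\<Sum>K * e = e" "e * \<Sum>K = e"
proof -
  have e: "e \<in> E" and orth: "\<And>k. k \<in> K - {e} \<Longrightarrow> k * e = 0 \<and> e * k = 0"
    using assms orthogonal by blast+
  have "\<Sum>K * e = e * e + (\<Sum>k\<in>K - {e}. k * e)"
    using sum.remove[OF assms(1,3), of id] by (simp add: distrib_right sum_distrib_right)
  then show "\<Sum>K * e = e" using orth idempotent[OF e] by simp
  have "e * \<Sum>K = e * e + (\<Sum>k\<in>K - {e}. e * k)"
    using sum.remove[OF assms(1,3), of id] by (simp add: distrib_left sum_distrib_left)
  then show "e * \<Sum>K = e" using orth idempotent[OF e] by simp
qed

lemma support:
  obtains K where "finite K" "K \<subseteq> E" "\<And>k. k \<in> E - K \<Longrightarrow> k * x = 0 \<and> x * k = 0"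
    "\<And>K'. K \<subseteq> K' \<Longrightarrow> K' \<subseteq> E \<Longrightarrow> finite K' \<Longrightarrow> \<Sum>K' * x = x \<and> x * \<Sum>K' = x"
proof -
  obtain F y where F: "finite F" "F \<subseteq> E \<times> E" and x: "x = (\<Sum>p\<in>F. fst p * y p * snd p)"
    using decomposition by blast
  define K where "K = fst ` F \<union> snd ` F"
  have "finite K" "K \<subseteq> E" using F by (auto simp: K_def)
  moreover have "k * x = 0 \<and> x * k = 0" if k: "k \<in> E - K" for k
  proof -
    have "k * fst p = 0" "snd p * k = 0" if "p \<in> F" for p
      using that k F(2) by (auto simp: K_def intro!: orthogonal)
    moreover have "k * x = (\<Sum>p\<in>F. k * fst p * y p * snd p)" "x * k = (\<Sum>p\<in>F. fst p * y p * (snd p * k))"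
      by (simp_all add: x sum_distrib_left sum_distrib_right mult.assoc)
    ultimately show ?thesis by simp
  qed
  moreover have "\<Sum>K' * x = x \<and> x * \<Sum>K' = x" if "K \<subseteq> K'" "K' \<subseteq> E" "finite K'" for K'
  proof -
    have unit: "\<Sum>K' * fst p = fst p" "snd p * \<Sum>K' = snd p" if "p \<in> F" for p
      using that \<open>K \<subseteq> K'\<close> sum_idempotents_mult[OF \<open>finite K'\<close> \<open>K' \<subseteq> E\<close>] by (auto simp: K_def)
    have "\<Sum>K' * x = (\<Sum>p\<in>F. \<Sum>K' * fst p * y p * snd p)"
      unfolding x sum_distrib_left by (simp add: mult.assoc)
    also have "\<dots> = x" unfolding x by (rule sum.cong) (simp_all add: unit)
    moreover have "x * \<Sum>K' = (\<Sum>p\<in>F. fst p * y p * (snd p * \<Sum>K'))"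
      unfolding x sum_distrib_right[of _ F] by (simp add: mult.assoc)
    moreover have "\<dots> = x" unfolding x by (rule sum.cong) (simp_all add: unit)
    ultimately show ?thesis by simp
  qed
  ultimately show ?thesis by (rule that)
qed

lemma local_unit:
  fixes X :: "'a set"
  assumes "finite X"
  shows "\<exists>u. u * u = u \<and> (\<forall>x\<in>X. u * x = x)"
proof -
  let ?P = "\<lambda>x K. finite K \<and> K \<subseteq> E \<and> (\<forall>K'. K \<subseteq> K' \<and> K' \<subseteq> E \<and> finite K' \<longrightarrow> \<Sum>K' * x = x)"
  have "\<forall>x. \<exists>K. ?P x K"
  proof
    fix x
    obtain K where "finite K" "K \<subseteq> E" "\<And>k. k \<in> E - K \<Longrightarrow> k * x = 0 \<and> x * k = 0"
      "\<And>K'. K \<subseteq> K' \<Longrightarrow> K' \<subseteq> E \<Longrightarrow> finite K' \<Longrightarrow> \<Sum>K' * x = x \<and> x * \<Sum>K' = x"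
      using support[of x] by blast
    then show "\<exists>K. ?P x K" by (intro exI[of _ K]) auto
  qed
  then obtain K where K: "\<And>x. ?P x (K x)" by metis
  define K0 where "K0 = (\<Union>x\<in>X. K x)"
  have K0: "finite K0" "K0 \<subseteq> E" using assms K by (auto simp: K0_def)
  have "\<Sum>K0 * \<Sum>K0 = (\<Sum>k\<in>K0. \<Sum>K0 * k)" by (simp add: sum_distrib_left)
  also have "\<dots> = \<Sum>K0" using K0 by (intro sum.cong) (simp_all add: sum_idempotents_mult)
  finally have "\<Sum>K0 * \<Sum>K0 = \<Sum>K0" .
  moreover have "\<Sum>K0 * x = x" if "x \<in> X" for x
  proof -
    have "K x \<subseteq> K0" using that by (auto simp: K0_def)
    then show ?thesis using K[of x] K0 by blast
  qed
  ultimately show ?thesis by (intro exI[of _ "\<Sum>K0"]) blast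
qed

end

lemma SLF_A_add: "\<psi> \<in> SLF_A sA \<Longrightarrow> \<psi> (x + y) = \<psi> x + \<psi> y"
  by (simp add: SLF_A_def)

lemma SLF_A_scale: "\<psi> \<in> SLF_A sA \<Longrightarrow> \<psi> (sA c x) = c * \<psi> x"
  by (simp add: SLF_A_def)

lemma SLF_A_commute: "\<psi> \<in> SLF_A sA \<Longrightarrow> \<psi> (x * y) = \<psi> (y * x)"
  by (simp add: SLF_A_def)

lemma SLF_A_sum: "\<psi> \<in> SLF_A sA \<Longrightarrow> \<psi> (sum f I) = (\<Sum>i\<in>I. \<psi> (f i))"
  by (rule additive_sum) (simp add: SLF_A_def)

lemma badd_eq_plus: "badd y1 y2 = y1 + y2"
  by (simp add: badd_def plus_fun_def)

lemma bmult_eq_comp: "bmult y1 y2 = y2 \<circ> y1"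
  by (simp add: bmult_def)

lemma bzero_eq_zero: "bzero = 0"
  by (simp add: bzero_def zero_fun_def)

locale left_module =
  fixes sA :: "complex \<Rightarrow> 'a::ring \<Rightarrow> 'a" and sM :: "complex \<Rightarrow> 'm::ab_group_add \<Rightarrow> 'm"
    and actM :: "'a \<Rightarrow> 'm \<Rightarrow> 'm"
  assumes is_lmod: "is_lmod sA sM actM UNIV"
begin

sublocale M: vector_space sM
  using is_lmod by (simp add: is_lmod_def)

lemma act_mult [simp]: "actM (a * b) \<xi> = actM a (actM b \<xi>)"
  and act_add_left [simp]: "actM (a + b) \<xi> = actM a \<xi> + actM b \<xi>"
  and act_add_right [simp]: "actM a (\<xi> + \<eta>) = actM a \<xi> + actM a \<eta>"
  and act_scale_left [simp]: "actM (sA c a) \<xi> = sM c (actM a \<xi>)"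
  and act_scale_right [simp]: "actM a (sM c \<xi>) = sM c (actM a \<xi>)"
  using is_lmod by (simp_all add: is_lmod_def)

lemma act_zero_left [simp]: "actM 0 \<xi> = 0"
  using act_add_left[of 0 0 \<xi>] by simp

lemma act_zero_right [simp]: "actM a 0 = 0"
  using act_add_right[of a 0 0] by simp

lemma act_sum_left: "actM (sum f I) \<xi> = (\<Sum>i\<in>I. actM (f i) \<xi>)"
  by (rule additive_sum[where f = "\<lambda>a. actM a \<xi>"]) simp

lemma act_sum_right: "actM a (sum f I) = (\<Sum>i\<in>I. actM a (f i))"
  by (rule additive_sum) simp

abbreviation B where "B \<equiv> Bset sM actM"

lemma in_B_iff: "y \<in> B \<longleftrightarrow> (\<forall>\<xi> \<eta>. y (\<xi> + \<eta>) = y \<xi> + y \<eta>) \<and> (\<forall>c \<xi>. y (sM c \<xi>) = sM c (y \<xi>)) \<and>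
    (\<forall>a \<xi>. y (actM a \<xi>) = actM a (y \<xi>))"
  by (simp add: Bset_def lhom_def)

lemma B_add_apply: "y \<in> B \<Longrightarrow> y (\<xi> + \<eta>) = y \<xi> + y \<eta>"
  and B_act_apply: "y \<in> B \<Longrightarrow> y (actM a \<xi>) = actM a (y \<xi>)"
  by (simp_all add: in_B_iff)

lemma B_zero_apply: "y \<in> B \<Longrightarrow> y 0 = 0"
  using B_add_apply[of y 0 0] by simp

lemma B_sum_apply: "y \<in> B \<Longrightarrow> y (sum f I) = (\<Sum>i\<in>I. y (f i))"
  by (rule additive_sum) (simp add: B_add_apply)

lemma id_in_B: "id \<in> B"
  and zero_in_B: "0 \<in> B"
  and add_in_B: "y1 \<in> B \<Longrightarrow> y2 \<in> B \<Longrightarrow> y1 + y2 \<in> B"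
  and comp_in_B: "y1 \<in> B \<Longrightarrow> y2 \<in> B \<Longrightarrow> y2 \<circ> y1 \<in> B"
  and bscale_in_B: "y \<in> B \<Longrightarrow> bscale sM c y \<in> B"
  by (simp_all add: in_B_iff bscale_def plus_fun_apply ac_simps M.scale_right_distrib)

lemma sum_in_B: "(\<And>i. i \<in> I \<Longrightarrow> y i \<in> B) \<Longrightarrow> sum y I \<in> B"
  by (induction I rule: infinite_finite_induct) (auto simp: zero_in_B add_in_B)

lemma SLF_B_add: "\<phi> \<in> SLF_B sM actM \<Longrightarrow> y1 \<in> B \<Longrightarrow> y2 \<in> B \<Longrightarrow> \<phi> (y1 + y2) = \<phi> y1 + \<phi> y2"
  and SLF_B_scale: "\<phi> \<in> SLF_B sM actM \<Longrightarrow> y \<in> B \<Longrightarrow> \<phi> (bscale sM c y) = c * \<phi> y"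
  and SLF_B_commute: "\<phi> \<in> SLF_B sM actM \<Longrightarrow> y1 \<in> B \<Longrightarrow> y2 \<in> B \<Longrightarrow> \<phi> (y2 \<circ> y1) = \<phi> (y1 \<circ> y2)"
  and SLF_B_outside: "\<phi> \<in> SLF_B sM actM \<Longrightarrow> y \<notin> B \<Longrightarrow> \<phi> y = 0"
  by (simp_all add: SLF_B_def badd_eq_plus bmult_eq_comp)

lemma SLF_B_zero: "\<phi> \<in> SLF_B sM actM \<Longrightarrow> \<phi> 0 = 0"
  using SLF_B_add[of \<phi> 0 0] zero_in_B by simp

lemma SLF_B_sum:
  assumes "\<phi> \<in> SLF_B sM actM" "\<And>i. i \<in> I \<Longrightarrow> y i \<in> B"
  shows "\<phi> (sum y I) = (\<Sum>i\<in>I. \<phi> (y i))"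
  using assms(2)
proof (induction I rule: infinite_finite_induct)
  case (insert i I)
  then have "\<phi> (sum y (insert i I)) = \<phi> (y i + sum y I)" by simp
  also have "\<dots> = \<phi> (y i) + \<phi> (sum y I)"
    using insert by (intro SLF_B_add[OF assms(1)] sum_in_B) auto
  also have "\<dots> = (\<Sum>i\<in>insert i I. \<phi> (y i))" using insert by simp
  finally show ?case .
qed (simp_all add: SLF_B_zero[OF assms(1)])

lemma hom_MB_in_B: "hom_MB sM actM \<beta> \<Longrightarrow> \<beta> \<xi> \<in> B"
  and hom_MB_scale: "hom_MB sM actM \<beta> \<Longrightarrow> \<beta> (sM c \<xi>) = bscale sM c (\<beta> \<xi>)"
  and hom_MB_B_apply: "hom_MB sM actM \<beta> \<Longrightarrow> y \<in> B \<Longrightarrow> \<beta> (y \<xi>) = y \<circ> \<beta> \<xi>"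
  by (simp_all add: hom_MB_def bmult_eq_comp)

lemma hom_MB_add: "hom_MB sM actM \<beta> \<Longrightarrow> \<beta> (\<xi> + \<eta>) = \<beta> \<xi> + \<beta> \<eta>"
  by (simp add: hom_MB_def badd_eq_plus)

lemma hom_MB_sum:
  assumes "hom_MB sM actM \<beta>"
  shows "\<beta> (sum f I) = (\<Sum>i\<in>I. \<beta> (f i))"
proof -
  have "\<beta> 0 = 0" using hom_MB_add[OF assms, of 0 0] by simp
  then show ?thesis
    by (induction I rule: infinite_finite_induct) (simp_all add: hom_MB_add[OF assms])
qed

lemma hom_BM_apply:
  assumes "hom_BM sM actM \<alpha>" "y \<in> B"
  shows "\<alpha> y = y (\<alpha> id)"
proof -
  have "\<alpha> (bmult id y) = y (\<alpha> id)" using assms id_in_B by (simp add: hom_BM_def)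
  then show ?thesis by (simp add: bmult_eq_comp)
qed

end

section \<open>Left coordinate systems and the left pseudotrace\<close>

locale left_coordinates = left_module +
  fixes L
  assumes left_coord: "left_coord sM actM L"
begin

lemma coord_hom_BM: "p \<in> L \<Longrightarrow> hom_BM sM actM (fst p)"
  and coord_hom_MB: "p \<in> L \<Longrightarrow> hom_MB sM actM (snd p)"
  using left_coord by (auto simp: left_coord_def)

lemma finite_nonzero_coords: "finite {p\<in>L. snd p \<xi> \<noteq> 0}"
  using left_coord by (simp add: left_coord_def bzero_eq_zero)

lemma left_coord_expansion:
  assumes "finite Q" "Q \<subseteq> L" "{p\<in>L. snd p \<xi> \<noteq> 0} \<subseteq> Q"
  shows "(\<Sum>p\<in>Q. snd p \<xi> (fst p id)) = \<xi>"
proof -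
  let ?S = "{p\<in>L. snd p \<xi> \<noteq> 0}"
  have "\<xi> = (\<Sum>p\<in>?S. fst p (snd p \<xi>))" using left_coord by (simp add: left_coord_def bzero_eq_zero)
  also have "\<dots> = (\<Sum>p\<in>?S. snd p \<xi> (fst p id))"
    by (rule sum.cong) (auto simp: coord_hom_BM coord_hom_MB hom_BM_apply hom_MB_in_B)
  also have "\<dots> = (\<Sum>p\<in>Q. snd p \<xi> (fst p id))"
    by (rule sum.mono_neutral_left) (use assms in auto)
  finally show ?thesis by simp
qed

definition coord_coeff
  where "coord_coeff x p q = snd p (actM x (fst q id))"

definition coord_support
  where "coord_support x = {p\<in>L. (\<exists>y\<in>B. actM x (fst p y) \<noteq> 0) \<or> (\<exists>\<xi>. snd p (actM x \<xi>) \<noteq> 0)}"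

lemma finite_coord_support: "finite (coord_support x)"
  using left_coord by (simp add: left_coord_def bzero_eq_zero coord_support_def)

lemma coord_support_subset: "coord_support x \<subseteq> L"
  by (auto simp: coord_support_def)

lemma coord_coeff_in_B: "p \<in> L \<Longrightarrow> coord_coeff x p q \<in> B"
  by (simp add: coord_coeff_def coord_hom_MB hom_MB_in_B)

lemma coord_coeff_add: "p \<in> L \<Longrightarrow> coord_coeff (x1 + x2) p q = coord_coeff x1 p q + coord_coeff x2 p q"
  by (simp add: coord_coeff_def hom_MB_add coord_hom_MB)

lemma coord_coeff_scale: "p \<in> L \<Longrightarrow> coord_coeff (sA c x) p q = bscale sM c (coord_coeff x p q)"
  by (simp add: coord_coeff_def hom_MB_scale coord_hom_MB)

lemma coord_coeff_nonzero_support: "p \<in> L \<Longrightarrow> coord_coeff x p q \<noteq> 0 \<Longrightarrow> p \<in> coord_support x"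
  by (auto simp: coord_coeff_def coord_support_def)

lemma coord_coeff_mult:
  assumes p: "p \<in> L" and Q: "finite Q" "Q \<subseteq> L" "coord_support y \<subseteq> Q"
  shows "coord_coeff (x * y) p r = (\<Sum>q\<in>Q. coord_coeff y q r \<circ> coord_coeff x p q)"
proof -
  have "{q\<in>L. snd q (actM y (fst r id)) \<noteq> 0} \<subseteq> Q"
    using Q(3) unfolding coord_support_def by blast
  then have "(\<Sum>q\<in>Q. coord_coeff y q r (fst q id)) = actM y (fst r id)"
    unfolding coord_coeff_def by (rule left_coord_expansion[OF Q(1,2)])
  then have "coord_coeff (x * y) p r = snd p (actM x (\<Sum>q\<in>Q. coord_coeff y q r (fst q id)))"
    by (simp add: coord_coeff_def)
  also have "\<dots> = snd p (\<Sum>q\<in>Q. actM x (coord_coeff y q r (fst q id)))"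
    by (simp only: act_sum_right)
  also have "\<dots> = (\<Sum>q\<in>Q. snd p (coord_coeff y q r (actM x (fst q id))))"
    using Q(2) by (auto simp: hom_MB_sum coord_hom_MB p B_act_apply coord_coeff_in_B intro!: sum.cong)
  also have "\<dots> = (\<Sum>q\<in>Q. coord_coeff y q r \<circ> coord_coeff x p q)"
  proof (rule sum.cong)
    fix q assume "q \<in> Q"
    then have "q \<in> L" using Q(2) by blast
    then show "snd p (coord_coeff y q r (actM x (fst q id))) = coord_coeff y q r \<circ> coord_coeff x p q"
      by (simp add: hom_MB_B_apply[OF coord_hom_MB[OF p]] coord_coeff_in_B coord_coeff_def[symmetric])
  qed simp
  finally show ?thesis .
qed

lemma left_ptr_eq_sum:
  assumes "\<phi> 0 = 0" "finite Q" "Q \<subseteq> L" "{p\<in>L. coord_coeff x p p \<noteq> 0} \<subseteq> Q"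
  shows "left_ptr actM L \<phi> x = (\<Sum>p\<in>Q. \<phi> (coord_coeff x p p))"
proof -
  have "left_ptr actM L \<phi> x = (\<Sum>p\<in>{p\<in>L. coord_coeff x p p \<noteq> 0}. \<phi> (coord_coeff x p p))"
    by (simp add: left_ptr_def coord_coeff_def zero_fun_def)
  also have "\<dots> = (\<Sum>p\<in>Q. \<phi> (coord_coeff x p p))"
    by (rule sum.mono_neutral_left) (use assms in auto)
  finally show ?thesis .
qed

lemma left_ptr_add:
  assumes \<phi>: "\<phi> \<in> SLF_B sM actM"
  shows "left_ptr actM L \<phi> (x1 + x2) = left_ptr actM L \<phi> x1 + left_ptr actM L \<phi> x2"
proof -
  let ?Q = "coord_support x1 \<union> coord_support x2"
  have Q: "finite ?Q" "?Q \<subseteq> L" using finite_coord_support coord_support_subset by auto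
  have "{p\<in>L. coord_coeff x p p \<noteq> 0} \<subseteq> ?Q" if "x \<in> {x1, x2, x1 + x2}" for x
  proof
    fix p assume p: "p \<in> {p\<in>L. coord_coeff x p p \<noteq> 0}"
    then have "coord_coeff x1 p p \<noteq> 0 \<or> coord_coeff x2 p p \<noteq> 0"
      using that by (auto simp: coord_coeff_add)
    then show "p \<in> ?Q" using p coord_coeff_nonzero_support by blast
  qed
  then have "left_ptr actM L \<phi> x = (\<Sum>p\<in>?Q. \<phi> (coord_coeff x p p))" if "x \<in> {x1, x2, x1 + x2}" for x
    using that by (intro left_ptr_eq_sum[of \<phi>, OF SLF_B_zero[OF \<phi>] Q]) blast
  moreover have "(\<Sum>p\<in>?Q. \<phi> (coord_coeff (x1 + x2) p p)) =
      (\<Sum>p\<in>?Q. \<phi> (coord_coeff x1 p p)) + (\<Sum>p\<in>?Q. \<phi> (coord_coeff x2 p p))"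
    using Q(2) by (auto simp: coord_coeff_add SLF_B_add[OF \<phi>] coord_coeff_in_B sum.distrib[symmetric]
        intro!: sum.cong)
  ultimately show ?thesis by simp
qed

lemma left_ptr_scale:
  assumes \<phi>: "\<phi> \<in> SLF_B sM actM"
  shows "left_ptr actM L \<phi> (sA c x) = c * left_ptr actM L \<phi> x"
proof -
  let ?Q = "coord_support x"
  have Q: "finite ?Q" "?Q \<subseteq> L" using finite_coord_support coord_support_subset by auto
  have "{p\<in>L. coord_coeff x' p p \<noteq> 0} \<subseteq> ?Q" if "x' \<in> {x, sA c x}" for x'
  proof
    fix p assume p: "p \<in> {p\<in>L. coord_coeff x' p p \<noteq> 0}"
    have "bscale sM c 0 = 0" by (simp add: bscale_def zero_fun_def)
    then have "coord_coeff x p p \<noteq> 0" using p that by (auto simp: coord_coeff_scale)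
    then show "p \<in> ?Q" using p coord_coeff_nonzero_support by blast
  qed
  then have "left_ptr actM L \<phi> x' = (\<Sum>p\<in>?Q. \<phi> (coord_coeff x' p p))" if "x' \<in> {x, sA c x}" for x'
    using that by (intro left_ptr_eq_sum[of \<phi>, OF SLF_B_zero[OF \<phi>] Q]) blast
  moreover have "(\<Sum>p\<in>?Q. \<phi> (coord_coeff (sA c x) p p)) = c * (\<Sum>p\<in>?Q. \<phi> (coord_coeff x p p))"
    using Q(2) by (auto simp: coord_coeff_scale SLF_B_scale[OF \<phi>] coord_coeff_in_B sum_distrib_left
        intro!: sum.cong)
  ultimately show ?thesis by simp
qed

lemma left_ptr_commute:
  assumes \<phi>: "\<phi> \<in> SLF_B sM actM"
  shows "left_ptr actM L \<phi> (x * y) = left_ptr actM L \<phi> (y * x)"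
proof -
  let ?Q = "coord_support x \<union> coord_support y"
  have Q: "finite ?Q" "?Q \<subseteq> L" using finite_coord_support coord_support_subset by auto
  have expand: "left_ptr actM L \<phi> (u * v) = (\<Sum>p\<in>?Q. \<Sum>q\<in>?Q. \<phi> (coord_coeff v q p \<circ> coord_coeff u p q))"
    if "{u, v} = {x, y}" for u v
  proof -
    have "{p\<in>L. coord_coeff (u * v) p p \<noteq> 0} \<subseteq> ?Q"
      using that by (auto simp: coord_coeff_def coord_support_def doubleton_eq_iff)
    then have "left_ptr actM L \<phi> (u * v) = (\<Sum>p\<in>?Q. \<phi> (coord_coeff (u * v) p p))"
      by (rule left_ptr_eq_sum[of \<phi>, OF SLF_B_zero[OF \<phi>] Q])
    also have "\<dots> = (\<Sum>p\<in>?Q. \<phi> (\<Sum>q\<in>?Q. coord_coeff v q p \<circ> coord_coeff u p q))"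
      using Q that by (intro sum.cong refl arg_cong[where f = \<phi>] coord_coeff_mult)
        (auto simp: doubleton_eq_iff)
    also have "\<dots> = (\<Sum>p\<in>?Q. \<Sum>q\<in>?Q. \<phi> (coord_coeff v q p \<circ> coord_coeff u p q))"
      using Q(2) by (intro sum.cong refl SLF_B_sum[OF \<phi>]) (auto intro!: comp_in_B coord_coeff_in_B)
    finally show ?thesis .
  qed
  have "(\<Sum>p\<in>?Q. \<Sum>q\<in>?Q. \<phi> (coord_coeff x q p \<circ> coord_coeff y p q)) =
      (\<Sum>q\<in>?Q. \<Sum>p\<in>?Q. \<phi> (coord_coeff x q p \<circ> coord_coeff y p q))"
    by (rule sum.swap)
  also have "\<dots> = (\<Sum>q\<in>?Q. \<Sum>p\<in>?Q. \<phi> (coord_coeff y p q \<circ> coord_coeff x q p))"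
    using Q(2) by (intro sum.cong refl SLF_B_commute[OF \<phi>] coord_coeff_in_B) auto
  finally show ?thesis using expand[of x y] expand[of y x] by (simp add: insert_commute)
qed

lemma left_ptr_in_SLF_A: "\<phi> \<in> SLF_B sM actM \<Longrightarrow> left_ptr actM L \<phi> \<in> SLF_A sA"
  by (simp add: SLF_A_def left_ptr_add left_ptr_scale left_ptr_commute)

end

section \<open>Right coordinate systems and the right pseudotrace\<close>

lemma Ae_iff: "z \<in> Ae e \<longleftrightarrow> (\<exists>x. z = x * e)"
  by (simp add: Ae_def)

lemma idem_in_Ae: "idem e \<Longrightarrow> e \<in> Ae e"
  unfolding Ae_def idem_def by (metis (mono_tags) mem_Collect_eq)

lemma Ae_mult_idem: "idem e \<Longrightarrow> a \<in> Ae e \<Longrightarrow> a * e = a"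
  by (auto simp: Ae_def idem_def mult.assoc)

lemma right_ptr_plus:
  "right_ptr sM actM e n \<beta> \<beta>c (\<lambda>x. \<psi>1 x + \<psi>2 x) =
     (\<lambda>y. right_ptr sM actM e n \<beta> \<beta>c \<psi>1 y + right_ptr sM actM e n \<beta> \<beta>c \<psi>2 y)"
  by (simp add: fun_eq_iff right_ptr_def sum.distrib)

lemma right_ptr_cmult:
  "right_ptr sM actM e n \<beta> \<beta>c (\<lambda>x. c * \<psi> x) = (\<lambda>y. c * right_ptr sM actM e n \<beta> \<beta>c \<psi> y)"
  by (simp add: fun_eq_iff right_ptr_def sum_distrib_left)

locale right_coordinates = left_module +
  fixes e n \<beta> \<beta>c
  assumes right_coord: "right_coord sA sM actM e n \<beta> \<beta>c"
begin

definition gen where "gen j = \<beta> j e"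

lemma \<beta>c_lhom: "j < n \<Longrightarrow> lhom sM sA actM (*) UNIV (Ae e) (\<beta>c j)"
  and \<beta>_lhom: "j < n \<Longrightarrow> lhom sA sM (*) actM (Ae e) UNIV (\<beta> j)"
  using right_coord by (simp_all add: right_coord_def)

lemma \<beta>c_in_Ae: "j < n \<Longrightarrow> \<beta>c j \<xi> \<in> Ae e"
  and \<beta>c_add: "j < n \<Longrightarrow> \<beta>c j (\<xi> + \<eta>) = \<beta>c j \<xi> + \<beta>c j \<eta>"
  and \<beta>c_act: "j < n \<Longrightarrow> \<beta>c j (actM a \<xi>) = a * \<beta>c j \<xi>"
  and \<beta>c_scale: "j < n \<Longrightarrow> \<beta>c j (sM c \<xi>) = sA c (\<beta>c j \<xi>)"
  using \<beta>c_lhom by (simp_all add: lhom_def)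

lemma \<beta>c_sum: "j < n \<Longrightarrow> \<beta>c j (sum f I) = (\<Sum>i\<in>I. \<beta>c j (f i))"
  by (rule additive_sum) (simp add: \<beta>c_add)

lemma idem_e: "idem e"
  using right_coord by (simp add: right_coord_def)

lemma \<beta>c_mult_e: "j < n \<Longrightarrow> \<beta>c j \<xi> * e = \<beta>c j \<xi>"
  by (rule Ae_mult_idem[OF idem_e \<beta>c_in_Ae])

lemma \<beta>_eq_act:
  assumes "j < n" "a \<in> Ae e"
  shows "\<beta> j a = actM a (gen j)"
proof -
  have "\<beta> j (a * e) = actM a (\<beta> j e)"
    using \<beta>_lhom[OF assms(1)] idem_in_Ae[OF idem_e] by (simp add: lhom_def)
  then show ?thesis using Ae_mult_idem[OF idem_e assms(2)] by (simp add: gen_def)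
qed

lemma right_coord_expansion: "(\<Sum>j<n. actM (\<beta>c j \<xi>) (gen j)) = \<xi>"
proof -
  have "(\<Sum>j<n. actM (\<beta>c j \<xi>) (gen j)) = (\<Sum>j<n. \<beta> j (\<beta>c j \<xi>))"
    by (simp add: \<beta>_eq_act \<beta>c_in_Ae)
  also have "\<dots> = \<xi>" using right_coord by (simp add: right_coord_def)
  finally show ?thesis .
qed

lemma right_ptr_eq: "y \<in> B \<Longrightarrow> right_ptr sM actM e n \<beta> \<beta>c \<psi> y = (\<Sum>j<n. \<psi> (\<beta>c j (y (gen j))))"
  by (simp add: right_ptr_def gen_def)

lemma \<beta>c_comp:
  assumes "y1 \<in> B" "y2 \<in> B" "j < n"
  shows "\<beta>c j (y2 (y1 (gen k))) = (\<Sum>l<n. \<beta>c l (y1 (gen k)) * \<beta>c j (y2 (gen l)))"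
proof -
  have "y2 (y1 (gen k)) = y2 (\<Sum>l<n. actM (\<beta>c l (y1 (gen k))) (gen l))"
    by (simp only: right_coord_expansion)
  also have "\<dots> = (\<Sum>l<n. actM (\<beta>c l (y1 (gen k))) (y2 (gen l)))"
    by (simp only: B_sum_apply[OF assms(2)] B_act_apply[OF assms(2)])
  finally show ?thesis by (simp add: \<beta>c_sum[OF assms(3)] \<beta>c_act[OF assms(3)])
qed

lemma right_ptr_commute:
  assumes \<psi>: "\<psi> \<in> SLF_A sA" and y: "y1 \<in> B" "y2 \<in> B"
  shows "right_ptr sM actM e n \<beta> \<beta>c \<psi> (y2 \<circ> y1) = right_ptr sM actM e n \<beta> \<beta>c \<psi> (y1 \<circ> y2)"
proof -
  have expand: "right_ptr sM actM e n \<beta> \<beta>c \<psi> (v \<circ> u) =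
      (\<Sum>j<n. \<Sum>l<n. \<psi> (\<beta>c l (u (gen j)) * \<beta>c j (v (gen l))))" if "u \<in> B" "v \<in> B" for u v
    using that by (simp add: comp_in_B right_ptr_eq \<beta>c_comp SLF_A_sum[OF \<psi>])
  have "(\<Sum>j<n. \<Sum>l<n. \<psi> (\<beta>c l (y2 (gen j)) * \<beta>c j (y1 (gen l)))) =
      (\<Sum>l<n. \<Sum>j<n. \<psi> (\<beta>c j (y1 (gen l)) * \<beta>c l (y2 (gen j))))"
    by (subst sum.swap) (simp add: SLF_A_commute[OF \<psi>])
  then show ?thesis using expand[OF y] expand[OF y(2,1)] by simp
qed

lemma right_ptr_in_SLF_B:
  assumes \<psi>: "\<psi> \<in> SLF_A sA"
  shows "right_ptr sM actM e n \<beta> \<beta>c \<psi> \<in> SLF_B sM actM"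
proof -
  have "right_ptr sM actM e n \<beta> \<beta>c \<psi> (y1 + y2) =
      right_ptr sM actM e n \<beta> \<beta>c \<psi> y1 + right_ptr sM actM e n \<beta> \<beta>c \<psi> y2"
    if "y1 \<in> B" "y2 \<in> B" for y1 y2
    using that by (simp add: add_in_B right_ptr_eq plus_fun_apply \<beta>c_add SLF_A_add[OF \<psi>] sum.distrib)
  moreover have "right_ptr sM actM e n \<beta> \<beta>c \<psi> (bscale sM c y) = c * right_ptr sM actM e n \<beta> \<beta>c \<psi> y"
    if "y \<in> B" for c y
    using right_ptr_eq[OF bscale_in_B[OF that]] right_ptr_eq[OF that]
    by (simp add: bscale_def \<beta>c_scale SLF_A_scale[OF \<psi>] sum_distrib_left)
  ultimately show ?thesis
    using right_ptr_commute[OF \<psi>]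
    by (simp add: SLF_B_def badd_eq_plus bmult_eq_comp right_ptr_def)
qed

end

section \<open>The right pseudotrace inverts the left one\<close>

locale coordinates = left_coordinates + right_coordinates
begin

definition transfer where "transfer j p = (\<lambda>\<zeta>. actM (\<beta>c j \<zeta>) (actM e (fst p id)))"

lemma transfer_in_B: "j < n \<Longrightarrow> transfer j p \<in> B"
  by (simp add: in_B_iff transfer_def \<beta>c_add \<beta>c_scale \<beta>c_act)

lemma coord_coeff_\<beta>c:
  assumes j: "j < n" and p: "p \<in> L" and y: "y \<in> B"
  shows "coord_coeff (\<beta>c j (y (gen j))) p p = transfer j p \<circ> y \<circ> snd p (gen j)"
proof -
  have "actM (\<beta>c j (y (gen j))) (fst p id) = transfer j p (y (gen j))"
    using \<beta>c_mult_e[OF j] act_mult[of "\<beta>c j (y (gen j))" e] by (simp add: transfer_def)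
  then have "coord_coeff (\<beta>c j (y (gen j))) p p = snd p (transfer j p (y (gen j)))"
    by (simp add: coord_coeff_def)
  also have "\<dots> = transfer j p \<circ> (y \<circ> snd p (gen j))"
    by (simp add: hom_MB_B_apply[OF coord_hom_MB[OF p]] transfer_in_B[OF j] y)
  finally show ?thesis by (simp add: o_assoc)
qed

lemma resolution_of_identity:
  assumes Q: "finite Q" "Q \<subseteq> L" "\<And>j. j < n \<Longrightarrow> {p\<in>L. snd p (gen j) \<noteq> 0} \<subseteq> Q"
  shows "(\<Sum>j<n. \<Sum>p\<in>Q. snd p (gen j) \<circ> transfer j p) = id"
proof
  fix \<zeta>
  have "(\<Sum>j<n. \<Sum>p\<in>Q. snd p (gen j) \<circ> transfer j p) \<zeta> =
      (\<Sum>j<n. \<Sum>p\<in>Q. actM (\<beta>c j \<zeta>) (actM e (snd p (gen j) (fst p id))))"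
  proof (simp only: sum_fun_apply, intro sum.cong refl)
    fix j p assume "p \<in> Q"
    then have "snd p (gen j) \<in> B" using Q(2) coord_hom_MB hom_MB_in_B by blast
    then show "(snd p (gen j) \<circ> transfer j p) \<zeta> = actM (\<beta>c j \<zeta>) (actM e (snd p (gen j) (fst p id)))"
      by (simp add: transfer_def B_act_apply)
  qed
  also have "\<dots> = (\<Sum>j<n. actM (\<beta>c j \<zeta>) (actM e (\<Sum>p\<in>Q. snd p (gen j) (fst p id))))"
    by (simp add: act_sum_right)
  also have "\<dots> = (\<Sum>j<n. actM (\<beta>c j \<zeta>) (gen j))"
  proof (intro sum.cong refl)
    fix j assume "j \<in> {..<n}"
    then have "actM (\<beta>c j \<zeta>) (actM e (gen j)) = actM (\<beta>c j \<zeta>) (gen j)"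
      using \<beta>c_mult_e act_mult[of "\<beta>c j \<zeta>" e] by simp
    then show "actM (\<beta>c j \<zeta>) (actM e (\<Sum>p\<in>Q. snd p (gen j) (fst p id))) = actM (\<beta>c j \<zeta>) (gen j)"
      using left_coord_expansion[OF Q(1,2) Q(3)] \<open>j \<in> {..<n}\<close> by simp
  qed
  also have "\<dots> = \<zeta>" by (rule right_coord_expansion)
  finally show "(\<Sum>j<n. \<Sum>p\<in>Q. snd p (gen j) \<circ> transfer j p) \<zeta> = id \<zeta>" by simp
qed

lemma left_ptr_\<beta>c:
  assumes \<phi>: "\<phi> \<in> SLF_B sM actM" and j: "j < n" and y: "y \<in> B"
    and Q: "finite Q" "Q \<subseteq> L" "{p\<in>L. snd p (gen j) \<noteq> 0} \<subseteq> Q"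
  shows "left_ptr actM L \<phi> (\<beta>c j (y (gen j))) = (\<Sum>p\<in>Q. \<phi> (snd p (gen j) \<circ> transfer j p \<circ> y))"
proof -
  have "p \<in> Q" if "p \<in> L" "coord_coeff (\<beta>c j (y (gen j))) p p \<noteq> 0" for p
  proof (rule ccontr)
    assume "p \<notin> Q"
    then have "snd p (gen j) = 0" using Q(3) that(1) by blast
    then have "coord_coeff (\<beta>c j (y (gen j))) p p = 0"
      by (simp add: coord_coeff_\<beta>c[OF j that(1) y] fun_eq_iff B_zero_apply[OF y]
          B_zero_apply[OF transfer_in_B[OF j]])
    then show False using that(2) by contradiction
  qed
  then have "left_ptr actM L \<phi> (\<beta>c j (y (gen j))) = (\<Sum>p\<in>Q. \<phi> (coord_coeff (\<beta>c j (y (gen j))) p p))"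
    by (intro left_ptr_eq_sum[of \<phi>, OF SLF_B_zero[OF \<phi>] Q(1,2)]) blast
  also have "\<dots> = (\<Sum>p\<in>Q. \<phi> (snd p (gen j) \<circ> transfer j p \<circ> y))"
  proof (intro sum.cong refl)
    fix p assume "p \<in> Q"
    then have p: "p \<in> L" using Q(2) by blast
    have "\<phi> (transfer j p \<circ> y \<circ> snd p (gen j)) = \<phi> (snd p (gen j) \<circ> (transfer j p \<circ> y))"
      using p by (intro SLF_B_commute[OF \<phi>] hom_MB_in_B[OF coord_hom_MB] comp_in_B transfer_in_B j y)
    then show "\<phi> (coord_coeff (\<beta>c j (y (gen j))) p p) = \<phi> (snd p (gen j) \<circ> transfer j p \<circ> y)"
      by (simp add: coord_coeff_\<beta>c[OF j p y] o_assoc)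
  qed
  finally show ?thesis .
qed

lemma right_ptr_left_ptr:
  assumes \<phi>: "\<phi> \<in> SLF_B sM actM"
  shows "right_ptr sM actM e n \<beta> \<beta>c (left_ptr actM L \<phi>) = \<phi>"
proof
  fix y
  show "right_ptr sM actM e n \<beta> \<beta>c (left_ptr actM L \<phi>) y = \<phi> y"
  proof (cases "y \<in> B")
    case y: True
    define Q where "Q = (\<Union>j<n. {p\<in>L. snd p (gen j) \<noteq> 0})"
    have Q: "finite Q" "Q \<subseteq> L" "\<And>j. j < n \<Longrightarrow> {p\<in>L. snd p (gen j) \<noteq> 0} \<subseteq> Q"
      using finite_nonzero_coords by (auto simp: Q_def)
    have in_B: "snd p (gen j) \<circ> transfer j p \<circ> y \<in> B" if "j < n" "p \<in> Q" for j p
      using that Q(2)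
      by (intro comp_in_B[OF y] comp_in_B[OF transfer_in_B hom_MB_in_B[OF coord_hom_MB]]) auto
    have "right_ptr sM actM e n \<beta> \<beta>c (left_ptr actM L \<phi>) y =
        (\<Sum>j<n. \<Sum>p\<in>Q. \<phi> (snd p (gen j) \<circ> transfer j p \<circ> y))"
      using y Q by (simp add: right_ptr_eq left_ptr_\<beta>c[OF \<phi>])
    also have "\<dots> = (\<Sum>j<n. \<phi> (\<Sum>p\<in>Q. snd p (gen j) \<circ> transfer j p \<circ> y))"
      using in_B by (intro sum.cong refl SLF_B_sum[OF \<phi>, symmetric]) auto
    also have "\<dots> = \<phi> (\<Sum>j<n. \<Sum>p\<in>Q. snd p (gen j) \<circ> transfer j p \<circ> y)"
      using in_B by (intro SLF_B_sum[OF \<phi>, symmetric] sum_in_B) auto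
    also have "(\<Sum>j<n. \<Sum>p\<in>Q. snd p (gen j) \<circ> transfer j p \<circ> y) =
        (\<Sum>j<n. \<Sum>p\<in>Q. snd p (gen j) \<circ> transfer j p) \<circ> y"
      by (simp add: fun_eq_iff sum_fun_apply)
    finally show ?thesis by (simp add: resolution_of_identity[OF Q])
  qed (simp add: right_ptr_def SLF_B_outside[OF \<phi>])
qed

lemma right_ptr_bij_betw:
  assumes "inj_on (right_ptr sM actM e n \<beta> \<beta>c) (SLF_A sA)"
  shows "bij_betw (right_ptr sM actM e n \<beta> \<beta>c) (SLF_A sA) (SLF_B sM actM)"
  unfolding bij_betw_def
proof (intro conjI assms subset_antisym)
  show "right_ptr sM actM e n \<beta> \<beta>c ` SLF_A sA \<subseteq> SLF_B sM actM"
    using right_ptr_in_SLF_B by blast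
  show "SLF_B sM actM \<subseteq> right_ptr sM actM e n \<beta> \<beta>c ` SLF_A sA"
    using right_ptr_left_ptr left_ptr_in_SLF_A by (metis image_eqI subsetI)
qed

lemma left_ptr_right_ptr:
  assumes inj: "inj_on (right_ptr sM actM e n \<beta> \<beta>c) (SLF_A sA)" and \<psi>: "\<psi> \<in> SLF_A sA"
  shows "left_ptr actM L (right_ptr sM actM e n \<beta> \<beta>c \<psi>) = \<psi>"
  using right_ptr_left_ptr[OF right_ptr_in_SLF_B[OF \<psi>]] left_ptr_in_SLF_A[OF right_ptr_in_SLF_B[OF \<psi>]] \<psi>
  by (rule inj_onD[OF inj])

end

section \<open>A left coordinate system adapted to the idempotents\<close>

locale quasicoherent_module = left_module sA sM actM + idempotent_decomposition E
  for sA :: "complex \<Rightarrow> 'a::ring \<Rightarrow> 'a" and sM :: "complex \<Rightarrow> 'm::ab_group_add \<Rightarrow> 'm"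
    and actM and E :: "'a set" +
  assumes quasicoherent: "quasicoherent actM UNIV"
begin

lemma module_support:
  obtains K where "finite K" "K \<subseteq> E" "\<And>k. k \<in> E - K \<Longrightarrow> actM k \<xi> = 0"
    "\<And>K'. K \<subseteq> K' \<Longrightarrow> K' \<subseteq> E \<Longrightarrow> finite K' \<Longrightarrow> actM (\<Sum>K') \<xi> = \<xi>"
proof -
  obtain x where x: "actM x \<xi> = \<xi>" using quasicoherent by (auto simp: quasicoherent_def)
  obtain K where K: "finite K" "K \<subseteq> E" "\<And>k. k \<in> E - K \<Longrightarrow> k * x = 0 \<and> x * k = 0"
    "\<And>K'. K \<subseteq> K' \<Longrightarrow> K' \<subseteq> E \<Longrightarrow> finite K' \<Longrightarrow> \<Sum>K' * x = x \<and> x * \<Sum>K' = x"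
    using support[of x] by blast
  have "actM k \<xi> = 0" if "k \<in> E - K" for k
    using K(3)[OF that] x act_mult[of k x \<xi>] by simp
  moreover have "actM (\<Sum>K') \<xi> = \<xi>" if "K \<subseteq> K'" "K' \<subseteq> E" "finite K'" for K'
    using K(4)[OF that] x act_mult[of "\<Sum>K'" x \<xi>] by simp
  ultimately show ?thesis using K(1,2) that by blast
qed

end

locale factored_idempotents = quasicoherent_module +
  fixes N :: "_ \<Rightarrow> nat" and H and X
  assumes H_lhom: "k \<in> E \<Longrightarrow> l < N k \<Longrightarrow> lhom sM sA actM (*) UNIV UNIV (H k l)"
    and sum_H_X: "k \<in> E \<Longrightarrow> (\<Sum>l<N k. H k l (X k l)) = k"
begin

text \<open>Off \<open>B\<close> the value of \<open>coord_vec k l\<close> is irrelevant; it records \<open>l\<close>, so that distinct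
  indices yield the same pair only when that pair contributes nothing (\<open>coord_pair_collision\<close>).\<close>

definition coord_vec where
  "coord_vec k l f = (if f \<in> B then f (actM k (X k l)) else sM (of_nat l) (f 0))"

definition coord_covec where "coord_covec k l \<xi> = (\<lambda>\<zeta>. actM (H k l \<zeta>) (actM k \<xi>))"

definition coord_pair where "coord_pair k l = (coord_vec k l, coord_covec k l)"

definition coord_index where "coord_index = {(k, l). k \<in> E \<and> l < N k}"

definition idem_coords where "idem_coords = case_prod coord_pair ` coord_index"

lemma H_add: "k \<in> E \<Longrightarrow> l < N k \<Longrightarrow> H k l (\<xi> + \<eta>) = H k l \<xi> + H k l \<eta>"
  and H_scale: "k \<in> E \<Longrightarrow> l < N k \<Longrightarrow> H k l (sM c \<xi>) = sA c (H k l \<xi>)"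
  and H_act: "k \<in> E \<Longrightarrow> l < N k \<Longrightarrow> H k l (actM a \<xi>) = a * H k l \<xi>"
  using H_lhom by (simp_all add: lhom_def)

lemma H_sum: "k \<in> E \<Longrightarrow> l < N k \<Longrightarrow> H k l (sum f I) = (\<Sum>i\<in>I. H k l (f i))"
  by (rule additive_sum) (simp add: H_add)

lemma coord_vec_in_B: "y \<in> B \<Longrightarrow> coord_vec k l y = y (actM k (X k l))"
  by (simp add: coord_vec_def)

lemma coord_covec_in_B: "k \<in> E \<Longrightarrow> l < N k \<Longrightarrow> coord_covec k l \<xi> \<in> B"
  by (simp add: in_B_iff coord_covec_def H_add H_scale H_act)

lemma hom_BM_coord_vec: "hom_BM sM actM (coord_vec k l)"
  by (simp add: hom_BM_def coord_vec_in_B badd_eq_plus bmult_eq_comp add_in_B comp_in_B bscale_in_B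
      plus_fun_apply) (simp add: bscale_def)

lemma hom_MB_coord_covec: "k \<in> E \<Longrightarrow> l < N k \<Longrightarrow> hom_MB sM actM (coord_covec k l)"
  using coord_covec_in_B
  by (simp add: hom_MB_def coord_covec_def badd_def bscale_def bmult_eq_comp fun_eq_iff B_act_apply)

lemma coord_covec_idem: "k \<in> E \<Longrightarrow> coord_covec k l (actM k \<xi>) = coord_covec k l \<xi>"
  using idempotent by (simp add: coord_covec_def act_mult[symmetric] del: act_mult)

lemma coord_pair_collision:
  assumes "(k, l) \<in> coord_index" "(k', l') \<in> coord_index" "(k, l) \<noteq> (k', l')"
    and "coord_pair k l = coord_pair k' l'"
  shows "coord_covec k l \<xi> = 0"
proof (cases "k = k'")
  case False
  have k: "k \<in> E" "k' \<in> E" using assms(1,2) by (auto simp: coord_index_def)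
  have "coord_covec k l \<xi> = coord_covec k l (actM k \<xi>)" using coord_covec_idem[OF k(1)] by simp
  also have "\<dots> = coord_covec k' l' (actM k \<xi>)" using assms(4) by (simp add: coord_pair_def)
  also have "\<dots> = 0"
    using orthogonal[OF k(2,1)] False by (simp add: coord_covec_def act_mult[symmetric] zero_fun_def del: act_mult)
  finally show ?thesis .
next
  case True
  then have "l \<noteq> l'" using assms(3) by simp
  have "coord_covec k l \<xi> \<zeta> = 0" for \<zeta>
  proof (rule ccontr)
    let ?\<eta> = "coord_covec k l \<xi> \<zeta>"
    assume "?\<eta> \<noteq> 0"
    then have "(\<lambda>_. ?\<eta>) \<notin> B" using B_zero_apply by blast
    moreover have "coord_vec k l (\<lambda>_. ?\<eta>) = coord_vec k' l' (\<lambda>_. ?\<eta>)"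
      using assms(4) by (simp add: coord_pair_def)
    ultimately have "sM (of_nat l) ?\<eta> = sM (of_nat l') ?\<eta>"
      using True by (simp add: coord_vec_def)
    then show False using \<open>?\<eta> \<noteq> 0\<close> \<open>l \<noteq> l'\<close> by simp
  qed
  then show ?thesis by (simp add: fun_eq_iff)
qed

lemma sum_idem_coords_reindex:
  assumes "finite J" "J \<subseteq> coord_index"
    and "\<And>k l. (k, l) \<in> coord_index \<Longrightarrow> coord_covec k l = (\<lambda>_. 0) \<Longrightarrow> g (coord_pair k l) = 0"
  shows "sum g (case_prod coord_pair ` J) = (\<Sum>(k, l)\<in>J. g (coord_pair k l))"
proof -
  have "sum g (case_prod coord_pair ` J) = sum (g \<circ> case_prod coord_pair) J"
  proof (rule sum.reindex_nontrivial[OF assms(1)])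
    fix i i' assume i: "i \<in> J" "i' \<in> J" "i \<noteq> i'" "case_prod coord_pair i = case_prod coord_pair i'"
    obtain k l k' l' where kl: "i = (k, l)" "i' = (k', l')" by fastforce
    have "coord_covec k l = (\<lambda>_. 0)"
      using i assms(2) kl by (intro ext coord_pair_collision[of k l k' l']) auto
    then show "g (case_prod coord_pair i) = 0" using i(1) assms(2) kl by (auto intro: assms(3))
  qed
  then show ?thesis by (simp add: case_prod_beta' comp_def)
qed

lemma idem_coords_elem: "p \<in> idem_coords \<Longrightarrow> \<exists>k l. (k, l) \<in> coord_index \<and> p = coord_pair k l"
  by (auto simp: idem_coords_def)

lemma index_over:
  assumes "finite K" "K \<subseteq> E"
  shows "finite (Sigma K (\<lambda>k. {..<N k}))" "Sigma K (\<lambda>k. {..<N k}) \<subseteq> coord_index"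
  using assms by (auto simp: coord_index_def)

lemma index_image_in_idem_coords: "J \<subseteq> coord_index \<Longrightarrow> case_prod coord_pair ` J \<subseteq> idem_coords"
  unfolding idem_coords_def by (rule image_mono)

lemma idem_coords_subset_index_image:
  assumes "\<And>k l. (k, l) \<in> coord_index \<Longrightarrow> k \<notin> K \<Longrightarrow> \<not> P (coord_pair k l)"
  shows "{p\<in>idem_coords. P p} \<subseteq> case_prod coord_pair ` Sigma K (\<lambda>k. {..<N k})"
proof
  fix p assume "p \<in> {p\<in>idem_coords. P p}"
  then obtain k l where "(k, l) \<in> coord_index" "p = coord_pair k l" "P p" using idem_coords_elem by blast
  with assms show "p \<in> case_prod coord_pair ` Sigma K (\<lambda>k. {..<N k})"
    by (force simp: coord_index_def)
qed

lemma coord_block_expansion: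
  assumes "k \<in> E"
  shows "(\<Sum>l<N k. coord_vec k l (coord_covec k l \<xi>)) = actM k \<xi>"
proof -
  have "(\<Sum>l<N k. coord_vec k l (coord_covec k l \<xi>)) = (\<Sum>l<N k. actM (k * H k l (X k l)) (actM k \<xi>))"
  proof (intro sum.cong refl)
    fix l assume "l \<in> {..<N k}"
    then show "coord_vec k l (coord_covec k l \<xi>) = actM (k * H k l (X k l)) (actM k \<xi>)"
      using assms by (simp add: coord_vec_in_B coord_covec_in_B, simp add: coord_covec_def H_act)
  qed
  also have "\<dots> = actM (k * (\<Sum>l<N k. H k l (X k l))) (actM k \<xi>)"
    by (simp only: act_sum_left sum_distrib_left)
  also have "\<dots> = actM k \<xi>"
    using idempotent[OF assms] by (simp add: sum_H_X[OF assms] act_mult[symmetric] del: act_mult)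
  finally show ?thesis .
qed

lemma sum_idem_coords_expansion_index:
  assumes J: "finite J" "J \<subseteq> coord_index" and S: "{p\<in>idem_coords. snd p \<xi> \<noteq> 0} \<subseteq> case_prod coord_pair ` J"
  shows "(\<Sum>p\<in>{p\<in>idem_coords. snd p \<xi> \<noteq> 0}. fst p (snd p \<xi>)) = (\<Sum>(k, l)\<in>J. coord_vec k l (coord_covec k l \<xi>))"
proof -
  have "fst p (snd p \<xi>) = 0" if p: "p \<in> case_prod coord_pair ` J - {p\<in>idem_coords. snd p \<xi> \<noteq> 0}" for p
  proof -
    obtain k l where kl: "(k, l) \<in> J" "p = coord_pair k l" using p by auto
    then have "snd p \<xi> = 0" using p index_image_in_idem_coords[OF J(2)] by blast
    then show ?thesis by (simp add: kl coord_pair_def coord_vec_in_B[OF zero_in_B])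
  qed
  then have "(\<Sum>p\<in>{p\<in>idem_coords. snd p \<xi> \<noteq> 0}. fst p (snd p \<xi>)) = (\<Sum>p\<in>case_prod coord_pair ` J. fst p (snd p \<xi>))"
    using J(1) by (intro sum.mono_neutral_left[OF _ S]) auto
  also have "\<dots> = (\<Sum>(k, l)\<in>J. coord_vec k l (coord_covec k l \<xi>))"
    by (subst sum_idem_coords_reindex[OF J]) (simp_all add: coord_pair_def coord_vec_in_B[OF zero_in_B])
  finally show ?thesis .
qed

lemma idem_coords_expansion:
  "finite {p\<in>idem_coords. snd p \<xi> \<noteq> 0} \<and> (\<Sum>p\<in>{p\<in>idem_coords. snd p \<xi> \<noteq> 0}. fst p (snd p \<xi>)) = \<xi>"
proof -
  obtain K where K: "finite K" "K \<subseteq> E" "\<And>k. k \<in> E - K \<Longrightarrow> actM k \<xi> = 0"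
    "\<And>K'. K \<subseteq> K' \<Longrightarrow> K' \<subseteq> E \<Longrightarrow> finite K' \<Longrightarrow> actM (\<Sum>K') \<xi> = \<xi>"
    using module_support[of \<xi>] by blast
  define J where "J = Sigma K (\<lambda>k. {..<N k})"
  note J = index_over[OF K(1,2), folded J_def]
  have "coord_covec k l 0 = 0" for k l by (simp add: coord_covec_def zero_fun_def)
  then have "coord_covec k l \<xi> = 0" if "(k, l) \<in> coord_index" "k \<notin> K" for k l
    using coord_covec_idem[of k l \<xi>] K(3)[of k] that by (simp add: coord_index_def)
  then have S: "{p\<in>idem_coords. snd p \<xi> \<noteq> 0} \<subseteq> case_prod coord_pair ` J"
    unfolding J_def by (intro idem_coords_subset_index_image) (simp add: coord_pair_def)
  have "(\<Sum>p\<in>{p\<in>idem_coords. snd p \<xi> \<noteq> 0}. fst p (snd p \<xi>)) = (\<Sum>(k, l)\<in>J. coord_vec k l (coord_covec k l \<xi>))"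
    by (rule sum_idem_coords_expansion_index[OF J S])
  also have "\<dots> = (\<Sum>k\<in>K. \<Sum>l<N k. coord_vec k l (coord_covec k l \<xi>))"
    unfolding J_def using K(1) by (simp add: sum.Sigma)
  also have "\<dots> = (\<Sum>k\<in>K. actM k \<xi>)"
    using K(2) by (intro sum.cong refl) (auto simp: coord_block_expansion)
  also have "\<dots> = \<xi>" using K(1,2,4) by (simp add: act_sum_left[symmetric])
  finally show ?thesis using S J(1) finite_subset by blast
qed

lemma idem_coords_finite_support:
  "finite {p\<in>idem_coords. (\<exists>y\<in>B. actM x (fst p y) \<noteq> 0) \<or> (\<exists>\<xi>. snd p (actM x \<xi>) \<noteq> 0)}"
proof -
  obtain K where K: "finite K" "K \<subseteq> E" "\<And>k. k \<in> E - K \<Longrightarrow> k * x = 0 \<and> x * k = 0"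
    "\<And>K'. K \<subseteq> K' \<Longrightarrow> K' \<subseteq> E \<Longrightarrow> finite K' \<Longrightarrow> \<Sum>K' * x = x \<and> x * \<Sum>K' = x"
    using support[of x] by blast
  have "actM x (coord_vec k l y) = 0" if "(k, l) \<in> coord_index" "k \<notin> K" "y \<in> B" for k l y
    using K(3)[of k] that
    by (auto simp: coord_index_def coord_vec_in_B B_act_apply[symmetric] act_mult[symmetric] B_zero_apply
        simp del: act_mult)
  moreover have "coord_covec k l (actM x \<xi>) = 0" if "(k, l) \<in> coord_index" "k \<notin> K" for k l \<xi>
    using K(3)[of k] that
    by (auto simp: coord_index_def act_mult[symmetric] coord_covec_def zero_fun_def simp del: act_mult)
  ultimately have "{p\<in>idem_coords. (\<exists>y\<in>B. actM x (fst p y) \<noteq> 0) \<or> (\<exists>\<xi>. snd p (actM x \<xi>) \<noteq> 0)}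
      \<subseteq> case_prod coord_pair ` Sigma K (\<lambda>k. {..<N k})"
    by (intro idem_coords_subset_index_image) (simp add: coord_pair_def)
  then show ?thesis using index_over[OF K(1,2)] finite_subset by blast
qed

lemma left_coord_idem_coords: "left_coord sM actM idem_coords"
  unfolding left_coord_def bzero_eq_zero
proof (intro conjI allI ballI idem_coords_expansion idem_coords_finite_support)
  fix p assume "p \<in> idem_coords"
  then obtain k l where "(k, l) \<in> coord_index" "p = coord_pair k l" using idem_coords_elem by blast
  then show "hom_BM sM actM (fst p)" "hom_MB sM actM (snd p)"
    by (simp_all add: coord_index_def coord_pair_def hom_BM_coord_vec hom_MB_coord_covec)
qed (use idem_coords_expansion in blast)+

end

sublocale factored_idempotents \<subseteq> IC: left_coordinates sA sM actM idem_coords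
  by unfold_locales (rule left_coord_idem_coords)

context factored_idempotents
begin

lemma left_ptr_idem_coords_blocks:
  assumes \<phi>0: "\<phi> 0 = 0" and K: "finite K" "K \<subseteq> E" "\<And>k. k \<in> E - K \<Longrightarrow> k * x = 0 \<and> x * k = 0"
  shows "left_ptr actM idem_coords \<phi> x = (\<Sum>k\<in>K. \<Sum>l<N k. \<phi> (IC.coord_coeff x (coord_pair k l) (coord_pair k l)))"
proof -
  define J where "J = Sigma K (\<lambda>k. {..<N k})"
  note J = index_over[OF K(1,2), folded J_def]
  have coeff: "IC.coord_coeff x (coord_pair k l) (coord_pair k l) = coord_covec k l (actM x (actM k (X k l)))"
    for k l by (simp add: IC.coord_coeff_def coord_pair_def coord_vec_in_B[OF id_in_B])
  have "coord_covec k l (actM x (actM k (X k l))) = 0" if "(k, l) \<in> coord_index" "k \<notin> K" for k l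
    using K(3)[of k] that
    by (auto simp: coord_index_def coord_covec_def zero_fun_def act_mult[symmetric] mult.assoc
        simp del: act_mult)
  then have "{p\<in>idem_coords. IC.coord_coeff x p p \<noteq> 0} \<subseteq> case_prod coord_pair ` J"
    unfolding J_def by (intro idem_coords_subset_index_image) (simp add: coeff)
  then have "left_ptr actM idem_coords \<phi> x = (\<Sum>p\<in>case_prod coord_pair ` J. \<phi> (IC.coord_coeff x p p))"
    using J index_image_in_idem_coords[OF J(2)] by (intro IC.left_ptr_eq_sum[of \<phi>, OF \<phi>0]) auto
  also have "\<dots> = (\<Sum>(k, l)\<in>J. \<phi> (IC.coord_coeff x (coord_pair k l) (coord_pair k l)))"
    by (rule sum_idem_coords_reindex[OF J]) (simp add: coeff \<phi>0)
  also have "\<dots> = (\<Sum>k\<in>K. \<Sum>l<N k. \<phi> (IC.coord_coeff x (coord_pair k l) (coord_pair k l)))"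
    unfolding J_def using K(1) by (simp add: sum.Sigma)
  finally show ?thesis .
qed

lemma right_ptr_idem_coords_coeff:
  assumes rc: "right_coord sA sM actM e n \<beta> \<beta>c" and \<psi>: "\<psi> \<in> SLF_A sA" and kl: "(k, l) \<in> coord_index"
  shows "right_ptr sM actM e n \<beta> \<beta>c \<psi> (IC.coord_coeff x (coord_pair k l) (coord_pair k l)) =
    \<psi> (k * x * k * H k l (X k l))"
proof -
  interpret right_coordinates sA sM actM e n \<beta> \<beta>c using rc by unfold_locales
  have k: "k \<in> E" "l < N k" using kl by (auto simp: coord_index_def)
  let ?W = "IC.coord_coeff x (coord_pair k l) (coord_pair k l)"
  have W: "?W = coord_covec k l (actM x (actM k (X k l)))"
    by (simp add: IC.coord_coeff_def coord_pair_def coord_vec_in_B[OF id_in_B])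
  have "(\<Sum>j<n. \<beta>c j (X k l) * H k l (gen j)) = H k l (\<Sum>j<n. actM (\<beta>c j (X k l)) (gen j))"
    by (simp add: H_sum[OF k] H_act[OF k])
  then have sum_\<beta>c_H: "(\<Sum>j<n. \<beta>c j (X k l) * H k l (gen j)) = H k l (X k l)"
    by (simp add: right_coord_expansion)
  have "right_ptr sM actM e n \<beta> \<beta>c \<psi> ?W = (\<Sum>j<n. \<psi> (\<beta>c j (?W (gen j))))"
    using W coord_covec_in_B[OF k] by (simp add: right_ptr_eq)
  also have "\<dots> = (\<Sum>j<n. \<psi> (k * x * k * (\<beta>c j (X k l) * H k l (gen j))))"
  proof (intro sum.cong refl)
    fix j assume "j \<in> {..<n}"
    then have "\<beta>c j (?W (gen j)) = H k l (gen j) * (k * x * k * \<beta>c j (X k l))"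
      by (simp add: W coord_covec_def \<beta>c_act act_mult[symmetric] mult.assoc del: act_mult)
    then show "\<psi> (\<beta>c j (?W (gen j))) = \<psi> (k * x * k * (\<beta>c j (X k l) * H k l (gen j)))"
      by (simp add: SLF_A_commute[OF \<psi>, of "H k l (gen j)"] mult.assoc)
  qed
  also have "\<dots> = \<psi> (k * x * k * H k l (X k l))"
    by (simp add: SLF_A_sum[OF \<psi>, symmetric] sum_distrib_left[symmetric] sum_\<beta>c_H)
  finally show ?thesis .
qed

lemma left_ptr_idem_coords_right_ptr:
  assumes rc: "right_coord sA sM actM e n \<beta> \<beta>c" and \<psi>: "\<psi> \<in> SLF_A sA"
  shows "left_ptr actM idem_coords (right_ptr sM actM e n \<beta> \<beta>c \<psi>) = \<psi>"
proof
  fix x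
  interpret right_coordinates sA sM actM e n \<beta> \<beta>c using rc by unfold_locales
  obtain K where K: "finite K" "K \<subseteq> E" "\<And>k. k \<in> E - K \<Longrightarrow> k * x = 0 \<and> x * k = 0"
    "\<And>K'. K \<subseteq> K' \<Longrightarrow> K' \<subseteq> E \<Longrightarrow> finite K' \<Longrightarrow> \<Sum>K' * x = x \<and> x * \<Sum>K' = x"
    using support[of x] by blast
  have "left_ptr actM idem_coords (right_ptr sM actM e n \<beta> \<beta>c \<psi>) x =
      (\<Sum>k\<in>K. \<Sum>l<N k. right_ptr sM actM e n \<beta> \<beta>c \<psi> (IC.coord_coeff x (coord_pair k l) (coord_pair k l)))"
    by (rule left_ptr_idem_coords_blocks[where \<phi> = "right_ptr sM actM e n \<beta> \<beta>c \<psi>",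
          OF SLF_B_zero[OF right_ptr_in_SLF_B[OF \<psi>]] K(1-3)])
  also have "\<dots> = (\<Sum>k\<in>K. \<Sum>l<N k. \<psi> (k * x * k * H k l (X k l)))"
    using K(2) by (intro sum.cong refl right_ptr_idem_coords_coeff[OF rc \<psi>]) (auto simp: coord_index_def)
  also have "\<dots> = (\<Sum>k\<in>K. \<psi> (x * k))"
  proof (intro sum.cong refl)
    fix k assume "k \<in> K"
    then have k: "k \<in> E" using K(2) by blast
    have "(\<Sum>l<N k. \<psi> (k * x * k * H k l (X k l))) = \<psi> (k * (x * k))"
      using idempotent[OF k]
      by (simp add: SLF_A_sum[OF \<psi>, symmetric] sum_distrib_left[symmetric] sum_H_X[OF k] mult.assoc)
    also have "\<dots> = \<psi> (x * k)"
      using idempotent[OF k] by (simp add: SLF_A_commute[OF \<psi>, of k] mult.assoc)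
    finally show "(\<Sum>l<N k. \<psi> (k * x * k * H k l (X k l))) = \<psi> (x * k)" .
  qed
  also have "\<dots> = \<psi> x"
    using K(1,2,4) by (simp add: SLF_A_sum[OF \<psi>, symmetric] sum_distrib_left[symmetric])
  finally show "left_ptr actM idem_coords (right_ptr sM actM e n \<beta> \<beta>c \<psi>) x = \<psi> x" .
qed

lemma pseudotrace_isomorphism:
  assumes L: "left_coord sM actM L" and rc: "right_coord sA sM actM e n \<beta> \<beta>c"
  shows "bij_betw (right_ptr sM actM e n \<beta> \<beta>c) (SLF_A sA) (SLF_B sM actM)"
    and "\<phi> \<in> SLF_B sM actM \<Longrightarrow> left_ptr actM L \<phi> \<in> SLF_A sA"
    and "\<phi> \<in> SLF_B sM actM \<Longrightarrow> right_ptr sM actM e n \<beta> \<beta>c (left_ptr actM L \<phi>) = \<phi>"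
    and "\<psi> \<in> SLF_A sA \<Longrightarrow> left_ptr actM L (right_ptr sM actM e n \<beta> \<beta>c \<psi>) = \<psi>"
proof -
  interpret coordinates sA sM actM L e n \<beta> \<beta>c using L rc by unfold_locales
  have inj: "inj_on (right_ptr sM actM e n \<beta> \<beta>c) (SLF_A sA)"
    by (rule inj_on_inverseI[where g = "left_ptr actM idem_coords"]) (rule left_ptr_idem_coords_right_ptr[OF rc])
  show "bij_betw (right_ptr sM actM e n \<beta> \<beta>c) (SLF_A sA) (SLF_B sM actM)"
    by (rule right_ptr_bij_betw[OF inj])
  show "\<phi> \<in> SLF_B sM actM \<Longrightarrow> left_ptr actM L \<phi> \<in> SLF_A sA"
    by (rule left_ptr_in_SLF_A)
  show "\<phi> \<in> SLF_B sM actM \<Longrightarrow> right_ptr sM actM e n \<beta> \<beta>c (left_ptr actM L \<phi>) = \<phi>"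
    by (rule right_ptr_left_ptr)
  show "\<psi> \<in> SLF_A sA \<Longrightarrow> left_ptr actM L (right_ptr sM actM e n \<beta> \<beta>c \<psi>) = \<psi>"
    by (rule left_ptr_right_ptr[OF inj])
qed

end

section \<open>Existence of coordinate systems\<close>

lemma is_lmod_Ae:
  assumes "calg sA"
  shows "is_lmod sA sA (*) (Ae e)"
proof -
  have vs: "vector_space sA" and scale': "\<And>c x y. sA c (x * y) = sA c x * y" "\<And>c x y. sA c (x * y) = x * sA c y"
    using assms unfolding calg_def by blast+
  note scale = scale'[symmetric]
  have "0 \<in> Ae e" unfolding Ae_iff by (metis mult_zero_left)
  moreover have "x + y \<in> Ae e" "sA c x \<in> Ae e" "a * x \<in> Ae e" if xy: "x \<in> Ae e" "y \<in> Ae e" for a c x y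
  proof -
    obtain x' y' where "x = x' * e" "y = y' * e" using xy by (meson Ae_iff)
    then have "x + y = (x' + y') * e" "sA c x = sA c x' * e" "a * x = (a * x') * e"
      by (simp_all add: distrib_right scale mult.assoc)
    then show "x + y \<in> Ae e" "sA c x \<in> Ae e" "a * x \<in> Ae e" by (auto simp: Ae_iff)
  qed
  ultimately show ?thesis
    unfolding is_lmod_def is_sub_def
    by (simp add: vs scale mult.assoc distrib_left distrib_right)
qed

lemma is_lmod_families:
  assumes "is_lmod sA sV act S"
  shows "is_lmod sA (\<lambda>c y i. sV c (y i)) (\<lambda>a y i. act a (y i)) {y. \<forall>i. y i \<in> S}"
  using assms vector_space_pointwise[of sV]
  by (simp add: is_lmod_def is_sub_def fun_eq_iff plus_fun_apply zero_fun_def)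

lemma fin_gen_cyclic:
  assumes "is_sub sV act S" "g \<in> S" "\<And>v. v \<in> S \<Longrightarrow> \<exists>a. v = act a g"
  shows "fin_gen sV act S"
  unfolding fin_gen_def
proof (intro exI conjI)
  show "S = gen_sub sV act {g}"
  proof
    show "gen_sub sV act {g} \<subseteq> S" using assms(1,2) by (auto simp: gen_sub_def)
    show "S \<subseteq> gen_sub sV act {g}"
    proof
      fix v assume "v \<in> S"
      then obtain a where "v = act a g" using assms(3) by blast
      then show "v \<in> gen_sub sV act {g}" by (auto simp: gen_sub_def is_sub_def)
    qed
  qed
qed (use assms(2) in auto)

lemma (in idempotent_decomposition) coherent_transport_Ae:
  fixes \<Phi> :: "'a \<Rightarrow> 'b univ"
  assumes calg: "calg sA" and k: "idem k" and \<Phi>: "univ_embedding sA (Ae k) \<Phi>"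
  shows "coherent sA uscale (transport_act \<Phi> (Ae k) (*)) (\<Phi> ` Ae k)"
proof -
  let ?act = "transport_act \<Phi> (Ae k) (*)"
  have act: "?act a (\<Phi> z) = \<Phi> (a * z)" if "z \<in> Ae k" for a z
    using \<Phi> that by (simp add: transport_act_image univ_embedding_def)
  have lmod: "is_lmod sA uscale ?act (\<Phi> ` Ae k)" by (rule is_lmod_transport[OF is_lmod_Ae[OF calg] \<Phi>])
  have "quasicoherent ?act (\<Phi> ` Ae k)"
    unfolding quasicoherent_def
  proof
    fix v assume "v \<in> \<Phi> ` Ae k"
    then obtain z where z: "z \<in> Ae k" "v = \<Phi> z" by blast
    obtain u where "u * z = z" using local_unit[of "{z}"] by auto
    then show "\<exists>u. ?act u v = v" using z act by metis
  qed
  moreover have "fin_gen uscale ?act (\<Phi> ` Ae k)"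
  proof (rule fin_gen_cyclic)
    show "is_sub uscale ?act (\<Phi> ` Ae k)" using lmod by (simp add: is_lmod_def)
    show "\<Phi> k \<in> \<Phi> ` Ae k" using idem_in_Ae[OF k] by blast
    fix v assume "v \<in> \<Phi> ` Ae k"
    then obtain z where z: "z \<in> Ae k" "v = \<Phi> z" by blast
    then show "\<exists>a. v = ?act a (\<Phi> k)" using act[OF idem_in_Ae[OF k]] Ae_mult_idem[OF k] by metis
  qed
  ultimately show ?thesis using lmod by (simp add: coherent_def)
qed

context left_module
begin

lemma is_sub_combinations:
  fixes m :: nat
  shows "is_sub sM actM {\<xi>. \<exists>y. \<xi> = (\<Sum>i<m. actM (y i) (gs i))}"
  unfolding is_sub_def
proof (intro conjI allI ballI)
  show "0 \<in> {\<xi>. \<exists>y. \<xi> = (\<Sum>i<m. actM (y i) (gs i))}" by (auto intro!: exI[of _ "\<lambda>i. 0"])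
next
  fix \<xi> \<eta> assume "\<xi> \<in> {\<xi>. \<exists>y. \<xi> = (\<Sum>i<m. actM (y i) (gs i))}" "\<eta> \<in> {\<xi>. \<exists>y. \<xi> = (\<Sum>i<m. actM (y i) (gs i))}"
  then obtain y z where "\<xi> = (\<Sum>i<m. actM (y i) (gs i))" "\<eta> = (\<Sum>i<m. actM (z i) (gs i))" by blast
  then have "\<xi> + \<eta> = (\<Sum>i<m. actM (y i + z i) (gs i))" by (simp add: sum.distrib)
  then show "\<xi> + \<eta> \<in> {\<xi>. \<exists>y. \<xi> = (\<Sum>i<m. actM (y i) (gs i))}" by - (rule CollectI, rule exI, assumption)
next
  fix c \<xi> assume "\<xi> \<in> {\<xi>. \<exists>y. \<xi> = (\<Sum>i<m. actM (y i) (gs i))}"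
  then obtain y where "\<xi> = (\<Sum>i<m. actM (y i) (gs i))" by blast
  then have "sM c \<xi> = (\<Sum>i<m. actM (sA c (y i)) (gs i))" by (simp add: M.scale_sum_right)
  then show "sM c \<xi> \<in> {\<xi>. \<exists>y. \<xi> = (\<Sum>i<m. actM (y i) (gs i))}" by - (rule CollectI, rule exI, assumption)
next
  fix a \<xi> assume "\<xi> \<in> {\<xi>. \<exists>y. \<xi> = (\<Sum>i<m. actM (y i) (gs i))}"
  then obtain y where "\<xi> = (\<Sum>i<m. actM (y i) (gs i))" by blast
  then have "actM a \<xi> = (\<Sum>i<m. actM (a * y i) (gs i))" by (simp add: act_sum_right)
  then show "actM a \<xi> \<in> {\<xi>. \<exists>y. \<xi> = (\<Sum>i<m. actM (y i) (gs i))}" by - (rule CollectI, rule exI, assumption)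
qed

lemma generator_in_combinations:
  fixes m :: nat
  assumes "j < m" "actM x (gs j) = gs j"
  shows "gs j \<in> {\<xi>. \<exists>y. \<xi> = (\<Sum>i<m. actM (y i) (gs i))}"
proof -
  have "(\<Sum>i<m. actM (if i = j then x else 0) (gs i)) = (\<Sum>i<m. if i = j then actM x (gs j) else 0)"
    by (intro sum.cong) simp_all
  also have "\<dots> = gs j" using assms by simp
  finally have "gs j = (\<Sum>i<m. actM (if i = j then x else 0) (gs i))" ..
  then show ?thesis by - (rule CollectI, rule exI, assumption)
qed

lemma finite_generators:
  assumes "fin_gen sM actM UNIV" "quasicoherent actM UNIV"
  shows "\<exists>(m :: nat) gs. \<forall>\<xi>. \<exists>y. \<xi> = (\<Sum>i<m. actM (y i) (gs i))"
proof -
  obtain G where G: "finite G" "UNIV = gen_sub sM actM G" using assms(1) by (auto simp: fin_gen_def)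
  obtain m and gs :: "nat \<Rightarrow> 'm" where gs: "G = gs ` {..<m}"
    using finite_imp_nat_seg_image_inj_on[OF G(1)] by (auto simp: lessThan_def)
  have "G \<subseteq> {\<xi>. \<exists>y. \<xi> = (\<Sum>i<m. actM (y i) (gs i))}"
  proof
    fix g assume "g \<in> G"
    then obtain j where j: "j < m" "g = gs j" using gs by blast
    obtain x where "actM x (gs j) = gs j" using assms(2) by (auto simp: quasicoherent_def)
    then show "g \<in> {\<xi>. \<exists>y. \<xi> = (\<Sum>i<m. actM (y i) (gs i))}"
      using generator_in_combinations j by blast
  qed
  then have "gen_sub sM actM G \<subseteq> {\<xi>. \<exists>y. \<xi> = (\<Sum>i<m. actM (y i) (gs i))}"
    unfolding gen_sub_def using is_sub_combinations[where m = m and gs = gs] by blast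
  then have "UNIV \<subseteq> {\<xi>. \<exists>y. \<xi> = (\<Sum>i<m. actM (y i) (gs i))}" using G(2) by simp
  then show ?thesis by (intro exI[of _ m] exI[of _ gs]) blast
qed

end

context quasicoherent_module
begin

lemma local_unit_module:
  assumes "finite \<Xi>"
  shows "\<exists>u. u * u = u \<and> (\<forall>\<xi>\<in>\<Xi>. actM u \<xi> = \<xi>)"
proof -
  have "\<forall>\<xi>. \<exists>x. actM x \<xi> = \<xi>" using quasicoherent by (simp add: quasicoherent_def)
  then obtain x where x: "\<And>\<xi>. actM (x \<xi>) \<xi> = \<xi>" by metis
  have "finite (x ` \<Xi>)" using assms by simp
  then obtain u where u: "u * u = u" "\<forall>z\<in>x ` \<Xi>. u * z = z"
    using local_unit by blast
  have "actM u \<xi> = \<xi>" if "\<xi> \<in> \<Xi>" for \<xi>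
  proof -
    have "u * x \<xi> = x \<xi>" using u(2) that by blast
    then show ?thesis using act_mult[of u "x \<xi>" \<xi>] x[of \<xi>] by simp
  qed
  then show ?thesis using u(1) by blast
qed

lemma idempotent_presentation:
  assumes "fin_gen sM actM UNIV"
  shows "\<exists>(m :: nat) gs f. idem f \<and> (\<forall>\<xi>. \<exists>y. (\<forall>i. y i \<in> Ae f) \<and> \<xi> = (\<Sum>i<m. actM (y i) (gs i)))"
proof -
  obtain m :: nat and gs where gen: "\<And>\<xi>. \<exists>y. \<xi> = (\<Sum>i<m. actM (y i) (gs i))"
    using finite_generators[OF assms quasicoherent] by blast
  have "\<exists>u. u * u = u \<and> (\<forall>\<xi>\<in>gs ` {..<m}. actM u \<xi> = \<xi>)" by (rule local_unit_module) simp
  then obtain f where f: "f * f = f" "\<And>i. i < m \<Longrightarrow> actM f (gs i) = gs i" by auto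
  have "\<exists>y. (\<forall>i. y i \<in> Ae f) \<and> \<xi> = (\<Sum>i<m. actM (y i) (gs i))" for \<xi>
  proof -
    obtain y where y: "\<xi> = (\<Sum>i<m. actM (y i) (gs i))" using gen by blast
    have "(\<Sum>i<m. actM (y i * f) (gs i)) = (\<Sum>i<m. actM (y i) (gs i))"
      by (intro sum.cong refl) (simp add: f(2))
    then have "\<xi> = (\<Sum>i<m. actM (y i * f) (gs i))" using y by simp
    moreover have "y i * f \<in> Ae f" for i by (auto simp: Ae_def)
    ultimately show ?thesis by (intro exI[of _ "\<lambda>i. y i * f"]) auto
  qed
  then show ?thesis using f(1) by (auto simp: idem_def)
qed

lemma exists_right_coord:
  assumes calg: "calg sA" and fg: "fin_gen sM actM UNIV" and proj: "lprojective sA sM actM UNIV"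
  shows "\<exists>e n \<beta> \<beta>c. right_coord sA sM actM e n \<beta> \<beta>c"
proof -
  obtain m :: nat and gs and f where f: "idem f"
    and pres: "\<And>\<xi>. \<exists>y. (\<forall>i. y i \<in> Ae f) \<and> \<xi> = (\<Sum>i<m. actM (y i) (gs i))"
    using idempotent_presentation[OF fg] by blast
  define D where "D = {y :: nat \<Rightarrow> 'a. \<forall>i. y i \<in> Ae f}"
  define \<pi> where "\<pi> y = (\<Sum>i<m. actM (y i) (gs i))" for y :: "nat \<Rightarrow> 'a"
  have D: "is_lmod sA (\<lambda>c y i. sA c (y i)) (\<lambda>a y i. a * y i) D"
    unfolding D_def by (rule is_lmod_families[OF is_lmod_Ae[OF calg]])
  have vs: "vector_space sA" using calg by (simp add: calg_def)
  then obtain \<Phi> :: "(nat \<Rightarrow> 'a) \<Rightarrow> 'a univ" where \<Phi>: "univ_embedding (\<lambda>c y i. sA c (y i)) UNIV \<Phi>"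
    using univ_embedding_families by blast
  have rng: "actM (y i) (gs i) \<in> range (\<lambda>(a, i). actM a (gs i))" for y i
    by (rule image_eqI[of _ _ "(y i, i)"]) auto
  have "UNIV \<subseteq> M.span (range (\<lambda>(a, i). actM a (gs i)))"
  proof (intro subsetI)
    fix \<xi> :: 'm
    obtain y where "\<xi> = (\<Sum>i<m. actM (y i) (gs i))" using pres by blast
    then show "\<xi> \<in> M.span (range (\<lambda>(a, i). actM a (gs i)))"
      by (simp only:) (intro M.span_sum M.span_base rng)
  qed
  then obtain \<iota> :: "'m \<Rightarrow> 'a \<times> nat \<Rightarrow> complex"
    where "inj \<iota>" "\<And>x y. \<iota> (x + y) = \<iota> x + \<iota> y" "\<And>c x. \<iota> (sM c x) = (\<lambda>i. c * \<iota> x i)"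
    using exists_linear_coordinates[OF M.vector_space_axioms] by blast
  then have \<iota>: "univ_embedding sM UNIV \<iota>" by (simp add: univ_embedding_def uscale_def)
  have \<pi>: "lhom (\<lambda>c y i. sA c (y i)) sM (\<lambda>a y i. a * y i) actM D UNIV \<pi>"
    by (simp add: lhom_def \<pi>_def plus_fun_apply sum.distrib M.scale_sum_right act_sum_right)
  have "\<pi> ` D = UNIV" using pres by (auto simp: D_def \<pi>_def)
  then obtain z where z: "lhom sM (\<lambda>c y i. sA c (y i)) actM (\<lambda>a y i. a * y i) UNIV D z"
    and lift: "\<And>\<xi>. \<pi> (z \<xi>) = \<xi>"
    using lprojective_section[OF proj is_lmod \<iota> D univ_embedding_subset[OF \<Phi>] \<pi>] by blast
  have "right_coord sA sM actM f m (\<lambda>i a. actM a (gs i)) (\<lambda>i \<xi>. z \<xi> i)"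
    using f z lift by (simp add: right_coord_def lhom_def D_def \<pi>_def plus_fun_apply)
  then show ?thesis by blast
qed

lemma idempotent_factors_through_generator:
  assumes calg: "calg sA" and gen: "proj_generator sA sM actM" and k: "idem k"
  shows "\<exists>(Nk :: nat) Hk Xk. (\<forall>l<Nk. lhom sM sA actM (*) UNIV (Ae k) (Hk l)) \<and> (\<Sum>l<Nk. Hk l (Xk l)) = k"
proof -
  have "vector_space sA" using calg by (simp add: calg_def)
  then obtain \<Phi> :: "'a \<Rightarrow> 'a univ" where \<Phi>: "univ_embedding sA UNIV \<Phi>"
    using univ_embedding_elements by blast
  have \<Phi>k: "univ_embedding sA (Ae k) \<Phi>" using univ_embedding_subset[OF \<Phi>] by blast
  let ?act = "transport_act \<Phi> (Ae k) (*)"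
  obtain n where "quotient_of_power sM actM UNIV uscale ?act (\<Phi> ` Ae k) n"
    using gen coherent_transport_Ae[OF calg k \<Phi>k] unfolding proj_generator_def by blast
  then obtain h where h: "\<And>i. i < n \<Longrightarrow> lhom sM uscale actM ?act UNIV (\<Phi> ` Ae k) (h i)"
    and onto: "\<forall>v\<in>\<Phi> ` Ae k. \<exists>\<xi>. (\<forall>i<n. \<xi> i \<in> UNIV) \<and> v = (\<Sum>i<n. h i (\<xi> i))"
    unfolding quotient_of_power_def by blast
  obtain \<xi> where \<xi>: "\<Phi> k = (\<Sum>i<n. h i (\<xi> i))" using onto idem_in_Ae[OF k] by blast
  define Hk where "Hk i = inv_into (Ae k) \<Phi> \<circ> h i" for i
  have Hk: "lhom sM sA actM (*) UNIV (Ae k) (Hk i)" if "i < n" for i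
    unfolding Hk_def using is_lmod_Ae[OF calg] is_lmod
    by (intro lhom_transport_back[OF h[OF that] _ _ \<Phi>k]) (simp_all add: is_lmod_def)
  have "\<Phi> (Hk i \<zeta>) = h i \<zeta>" if "i < n" for i \<zeta>
    using h[OF that] by (simp add: Hk_def lhom_def f_inv_into_f)
  then have "\<Phi> (\<Sum>i<n. Hk i (\<xi> i)) = \<Phi> k"
    using \<Phi> by (simp add: \<xi> additive_sum univ_embedding_def)
  then have "(\<Sum>i<n. Hk i (\<xi> i)) = k" using \<Phi> by (simp add: univ_embedding_def inj_eq)
  then show ?thesis using Hk by blast
qed

lemma exists_factored_idempotents:
  assumes calg: "calg sA" and gen: "proj_generator sA sM actM"
  shows "\<exists>N H X. factored_idempotents sA sM actM E N H X"
proof -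
  have "\<forall>k\<in>E. \<exists>Nk :: nat. \<exists>Hk Xk. (\<forall>l<Nk. lhom sM sA actM (*) UNIV (Ae k) (Hk l)) \<and> (\<Sum>l<Nk. Hk l (Xk l)) = k"
    using idempotent_factors_through_generator[OF calg gen] idempotent by (simp add: idem_def)
  then obtain N :: "'a \<Rightarrow> nat" and H X where
    "\<And>k. k \<in> E \<Longrightarrow> (\<forall>l<N k. lhom sM sA actM (*) UNIV (Ae k) (H k l)) \<and> (\<Sum>l<N k. H k l (X k l)) = k"
    by metis
  then have "factored_idempotents sA sM actM E N H X"
    by unfold_locales (auto simp: lhom_def)
  then show ?thesis by blast
qed

end

lemma AUF_idempotent_decomposition:
  fixes sA :: "complex \<Rightarrow> 'a::ring \<Rightarrow> 'a"
  assumes "AUF sA"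
  shows "\<exists>E :: 'a set. idempotent_decomposition E"
proof -
  obtain E :: "'a set" where "\<forall>e\<in>E. idem e" "\<forall>e\<in>E. \<forall>f\<in>E. e \<noteq> f \<longrightarrow> e * f = 0"
    "\<forall>x. \<exists>F y. finite F \<and> F \<subseteq> E \<times> E \<and> x = (\<Sum>p\<in>F. fst p * y p * snd p)"
    using assms unfolding AUF_def by (elim conjE exE) blast
  then have "idempotent_decomposition E" by unfold_locales (auto simp: idem_def)
  then show ?thesis ..
qed

theorem theorem9p4:
  fixes sA :: "complex \<Rightarrow> 'a::ring \<Rightarrow> 'a"
    and sM :: "complex \<Rightarrow> 'm::ab_group_add \<Rightarrow> 'm"
    and actM :: "'a \<Rightarrow> 'm \<Rightarrow> 'm"
  assumes "strongly_AUF sA"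
    and "proj_generator sA sM actM"
  shows "(\<exists>L. left_coord sM actM L) \<and>
         (\<exists>e n \<beta> \<beta>c. right_coord sA sM actM e n \<beta> \<beta>c) \<and>
         (\<forall>L e n \<beta> \<beta>c. left_coord sM actM L \<longrightarrow> right_coord sA sM actM e n \<beta> \<beta>c \<longrightarrow>
            bij_betw (right_ptr sM actM e n \<beta> \<beta>c) (SLF_A sA) (SLF_B sM actM) \<and>
            (\<forall>\<psi>1\<in>SLF_A sA. \<forall>\<psi>2\<in>SLF_A sA.
               right_ptr sM actM e n \<beta> \<beta>c (\<lambda>x. \<psi>1 x + \<psi>2 x) =
               (\<lambda>y. right_ptr sM actM e n \<beta> \<beta>c \<psi>1 y + right_ptr sM actM e n \<beta> \<beta>c \<psi>2 y)) \<and>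
            (\<forall>c. \<forall>\<psi>\<in>SLF_A sA.
               right_ptr sM actM e n \<beta> \<beta>c (\<lambda>x. c * \<psi> x) =
               (\<lambda>y. c * right_ptr sM actM e n \<beta> \<beta>c \<psi> y)) \<and>
            (\<forall>\<phi>\<in>SLF_B sM actM. left_ptr actM L \<phi> \<in> SLF_A sA \<and>
               right_ptr sM actM e n \<beta> \<beta>c (left_ptr actM L \<phi>) = \<phi>) \<and>
            (\<forall>\<psi>\<in>SLF_A sA. left_ptr actM L (right_ptr sM actM e n \<beta> \<beta>c \<psi>) = \<psi>))"
proof -
  have calg: "calg sA" and "\<exists>E :: 'a set. idempotent_decomposition E"
    using assms(1) AUF_idempotent_decomposition by (auto simp: strongly_AUF_def AUF_def)
  then obtain E :: "'a set" where E: "idempotent_decomposition E" by blast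
  have coh: "coherent sA sM actM UNIV" and proj: "lprojective sA sM actM UNIV"
    using assms(2) by (simp_all add: proj_generator_def)
  interpret quasicoherent_module sA sM actM E
    using E coh by (simp add: quasicoherent_module_def quasicoherent_module_axioms_def left_module_def
        coherent_def)
  obtain N H X where "factored_idempotents sA sM actM E N H X"
    using exists_factored_idempotents[OF calg assms(2)] by blast
  then interpret D: factored_idempotents sA sM actM E N H X .
  have "\<exists>L. left_coord sM actM L" using D.left_coord_idem_coords by blast
  moreover have "\<exists>e n \<beta> \<beta>c. right_coord sA sM actM e n \<beta> \<beta>c"
    using exists_right_coord[OF calg _ proj] coh by (simp add: coherent_def)
  ultimately show ?thesis by (simp add: right_ptr_plus right_ptr_cmult D.pseudotrace_isomorphism)
qed

end
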